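(* Let $S$ be a (von Neumann) regular semigroup with finitely many left ideals and finitely many right ideals. If every maximal subgroup of $S$ is defined by a finite complete rewriting system, then $S$ is also defined by a finite complete rewriting system.
   Context: A semigroup $S$ is (von Neumann) regular if for every $x\in S$ there is $y\in S$ with $xyx=x$. A rewriting system (presentation) $\langle X\mid R\rangle$ consists of an alphabet $X$ and a set $R$ of rules $u\to v$ with $u,v$ words over $X$; it is finite if $X$ and $R$ are finite. The single-step reduction $\to_R$ is given by $w_1uw_2\to_R w_1vw_2$ for $(u\to v)\in R$; $\to_R^*$ is its reflexive transitive closure. The system is noetherian if there is no infinite chain $w_1\to_R w_2\to_R\cdots$, confluent if whenever $u\to_R^* v$ and $u\to_R^* v'$ there is $w$ with $v\to_R^* w$ and $v'\to_R^* w$, and complete if it is both. A semigroup is defined by $\langle X\mid R\rangle$ if it is isomorphic to the quotient of the free semigroup $X^+$ by the congruence generated by $R$. (Being defined by a finite complete semigroup presentation is equivalent, for monoids, to being defined by a finite complete monoid presentation, so no ambiguity arises.) *)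

theory Defs
  imports Main
begin

definition semigroup_on :: "'a set \<Rightarrow> ('a \<Rightarrow> 'a \<Rightarrow> 'a) \<Rightarrow> bool" where
  "semigroup_on S f \<longleftrightarrow> (\<forall>x\<in>S. \<forall>y\<in>S. f x y \<in> S) \<and>
     (\<forall>x\<in>S. \<forall>y\<in>S. \<forall>z\<in>S. f (f x y) z = f x (f y z))"

definition regular_semigroup :: "'a set \<Rightarrow> ('a \<Rightarrow> 'a \<Rightarrow> 'a) \<Rightarrow> bool" where
  "regular_semigroup S f \<longleftrightarrow> semigroup_on S f \<and> (\<forall>x\<in>S. \<exists>y\<in>S. f (f x y) x = x)"

definition left_ideal :: "'a set \<Rightarrow> ('a \<Rightarrow> 'a \<Rightarrow> 'a) \<Rightarrow> 'a set \<Rightarrow> bool" where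
  "left_ideal S f I \<longleftrightarrow> I \<subseteq> S \<and> I \<noteq> {} \<and> (\<forall>s\<in>S. \<forall>x\<in>I. f s x \<in> I)"

definition right_ideal :: "'a set \<Rightarrow> ('a \<Rightarrow> 'a \<Rightarrow> 'a) \<Rightarrow> 'a set \<Rightarrow> bool" where
  "right_ideal S f I \<longleftrightarrow> I \<subseteq> S \<and> I \<noteq> {} \<and> (\<forall>s\<in>S. \<forall>x\<in>I. f x s \<in> I)"

definition subgroup_of :: "'a set \<Rightarrow> ('a \<Rightarrow> 'a \<Rightarrow> 'a) \<Rightarrow> 'a set \<Rightarrow> bool" where
  "subgroup_of S f H \<longleftrightarrow> H \<subseteq> S \<and> H \<noteq> {} \<and> (\<forall>x\<in>H. \<forall>y\<in>H. f x y \<in> H) \<and>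
     (\<exists>e\<in>H. (\<forall>x\<in>H. f e x = x \<and> f x e = x) \<and> (\<forall>x\<in>H. \<exists>y\<in>H. f x y = e \<and> f y x = e))"

definition maximal_subgroup :: "'a set \<Rightarrow> ('a \<Rightarrow> 'a \<Rightarrow> 'a) \<Rightarrow> 'a set \<Rightarrow> bool" where
  "maximal_subgroup S f H \<longleftrightarrow> subgroup_of S f H \<and>
     (\<forall>K. subgroup_of S f K \<and> H \<subseteq> K \<longrightarrow> K = H)"

text \<open>Rewriting systems over an alphabet X (letters are natural numbers, w.l.o.g.);
  words are nonempty lists over X; R is a set of rules (u, v).\<close>

definition rw_step :: "nat set \<Rightarrow> (nat list \<times> nat list) set \<Rightarrow> (nat list \<times> nat list) set" where
  "rw_step X R = {(w1 @ u @ w2, w1 @ v @ w2) | w1 u v w2.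
      (u, v) \<in> R \<and> w1 \<in> lists X \<and> w2 \<in> lists X}"

definition rw_noetherian :: "nat set \<Rightarrow> (nat list \<times> nat list) set \<Rightarrow> bool" where
  "rw_noetherian X R \<longleftrightarrow> \<not> (\<exists>c :: nat \<Rightarrow> nat list. \<forall>i. (c i, c (Suc i)) \<in> rw_step X R)"

definition rw_confluent :: "nat set \<Rightarrow> (nat list \<times> nat list) set \<Rightarrow> bool" where
  "rw_confluent X R \<longleftrightarrow> (\<forall>u v v'. (u, v) \<in> (rw_step X R)\<^sup>* \<and> (u, v') \<in> (rw_step X R)\<^sup>* \<longrightarrow>
      (\<exists>w. (v, w) \<in> (rw_step X R)\<^sup>* \<and> (v', w) \<in> (rw_step X R)\<^sup>*))"

definition finite_complete_rws :: "nat set \<Rightarrow> (nat list \<times> nat list) set \<Rightarrow> bool" where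
  "finite_complete_rws X R \<longleftrightarrow> finite X \<and> finite R \<and>
     (\<forall>(u, v)\<in>R. u \<in> lists X \<and> u \<noteq> [] \<and> v \<in> lists X \<and> v \<noteq> []) \<and>
     rw_noetherian X R \<and> rw_confluent X R"

text \<open>\<langle>X | R\<rangle> defines (S, f): S is isomorphic to X^+ modulo the congruence generated by R,
  expressed as a surjective homomorphism \<psi> : X^+ -> S whose kernel is exactly that congruence.\<close>

definition presents :: "nat set \<Rightarrow> (nat list \<times> nat list) set \<Rightarrow> 'a set \<Rightarrow> ('a \<Rightarrow> 'a \<Rightarrow> 'a) \<Rightarrow> bool" where
  "presents X R S f \<longleftrightarrow> (\<exists>\<psi> :: nat list \<Rightarrow> 'a.
     (\<forall>w\<in>lists X - {[]}. \<psi> w \<in> S) \<and>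
     (\<forall>w1\<in>lists X - {[]}. \<forall>w2\<in>lists X - {[]}. \<psi> (w1 @ w2) = f (\<psi> w1) (\<psi> w2)) \<and>
     S \<subseteq> \<psi> ` (lists X - {[]}) \<and>
     (\<forall>w1\<in>lists X - {[]}. \<forall>w2\<in>lists X - {[]}.
        \<psi> w1 = \<psi> w2 \<longleftrightarrow> (w1, w2) \<in> (rw_step X R \<union> (rw_step X R)\<inverse>)\<^sup>*))"

definition has_finite_complete_presentation :: "'a set \<Rightarrow> ('a \<Rightarrow> 'a \<Rightarrow> 'a) \<Rightarrow> bool" where
  "has_finite_complete_presentation S f \<longleftrightarrow>
     (\<exists>X R. finite_complete_rws X R \<and> presents X R S f)"

end

theory Submission
  imports Defs "HOL-Library.Multiset" "HOL-Library.Product_Lexorder" "HOL-Library.Countable_Set"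
begin

(*
  Every element y of S factors as y = a g b, where e is a fixed idempotent of the J-class of y,
  a is a fixed representative of the R-class of y inside the L-class of e, b a fixed representative
  of the L-class of y inside the R-class of e, and g lies in the maximal subgroup H e
  (Green's lemma; finitely many one-sided ideals make S stable and all these choices finite).
  The generators of S are the quadruples (e, x, a, b) with x a generator of H e.  A word of letters
  with the same e whose inner labels are all e spells a x1 ... xk b; these words with x1 ... xk
  irreducible for H e are the normal forms.  The rules lift the complete rules of each H e and
  rewrite every other pair of adjacent letters to the normal form of its product, so irreducible
  words are normal forms, and confluence reduces to termination.  A rule either stays in one
  J-class, where it lowers the number of non-trivial outer labels or is a lifted group rule, or it
  produces only letters of strictly lower J-class.  Hence the multisets of maximal one-class blocks,
  compared lexicographically from the highest J-class down, decrease.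
*)

definition rules_over :: "nat set \<Rightarrow> (nat list \<times> nat list) set \<Rightarrow> bool" where
  "rules_over X R \<longleftrightarrow> (\<forall>(u, v)\<in>R. u \<in> lists X \<and> u \<noteq> [] \<and> v \<in> lists X \<and> v \<noteq> [])"

lemma finite_complete_rws_rules_over: "finite_complete_rws X R \<Longrightarrow> rules_over X R"
  unfolding finite_complete_rws_def rules_over_def by blast

lemma rw_stepI: "(u, v) \<in> R \<Longrightarrow> p \<in> lists X \<Longrightarrow> q \<in> lists X \<Longrightarrow> (p @ u @ q, p @ v @ q) \<in> rw_step X R"
  unfolding rw_step_def by blast

lemma rw_stepE:
  assumes "(x, y) \<in> rw_step X R"
  obtains p u v q where "x = p @ u @ q" "y = p @ v @ q" "(u, v) \<in> R" "p \<in> lists X" "q \<in> lists X"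
  using assms unfolding rw_step_def by blast

lemma rw_step_context:
  assumes "(x, y) \<in> rw_step X R" "p \<in> lists X" "q \<in> lists X"
  shows "(p @ x @ q, p @ y @ q) \<in> rw_step X R"
proof -
  obtain p' u v q' where "x = p' @ u @ q'" "y = p' @ v @ q'" "(u, v) \<in> R" "p' \<in> lists X" "q' \<in> lists X"
    using assms(1) by (rule rw_stepE)
  then show ?thesis using rw_stepI[of u v R "p @ p'" X "q' @ q"] assms(2,3) by simp
qed

lemma rw_step_in_lists:
  assumes "(x, y) \<in> rw_step X R" "rules_over X R"
  shows "x \<in> lists X" "y \<in> lists X" "x \<noteq> []" "y \<noteq> []"
  using assms unfolding rw_step_def rules_over_def by (auto 0 4 dest!: bspec)

lemma rtrancl_rw_step_in_lists:
  assumes "(x, y) \<in> (rw_step X R)\<^sup>*" "rules_over X R" "x \<in> lists X" "x \<noteq> []"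
  shows "y \<in> lists X \<and> y \<noteq> []"
  using assms(1,3,4) by induction (use rw_step_in_lists[OF _ assms(2)] in auto)

lemma rw_noetherian_wf: "rw_noetherian X R \<longleftrightarrow> wf ((rw_step X R)\<inverse>)"
  unfolding rw_noetherian_def wf_iff_no_infinite_down_chain by auto

definition proper_factor :: "nat set \<Rightarrow> (nat list \<times> nat list) set" where
  "proper_factor X = {(y, x). x \<in> lists X \<and> (\<exists>a b. x = a @ y @ b \<and> a @ b \<noteq> [])}"

definition rw_factor_order :: "nat set \<Rightarrow> (nat list \<times> nat list) set \<Rightarrow> (nat list \<times> nat list) set" where
  "rw_factor_order X R = (rw_step X R)\<inverse> \<union> proper_factor X"

text \<open>Induction on the rewrite order of the surrounding word, then on the length of the factor.\<close>

lemma wf_rw_factor_order: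
  assumes noeth: "rw_noetherian X R" and R: "rules_over X R"
  shows "wf (rw_factor_order X R)"
proof -
  have factor_acc: "y \<in> Wellfounded.acc (rw_factor_order X R)"
    if "x \<in> lists X" "x = a @ y @ b" for x a y b
    using that
  proof (induction x arbitrary: a y b rule: wf_induct[OF noeth[unfolded rw_noetherian_wf]])
    case (1 x)
    from "1.prems" show ?case
    proof (induction "length y" arbitrary: a y b rule: less_induct)
      case less
      show ?case
      proof (rule accI)
        fix z assume "(z, y) \<in> rw_factor_order X R"
        then consider "(y, z) \<in> rw_step X R" | c d where "y = c @ z @ d" "c @ d \<noteq> []"
          unfolding rw_factor_order_def proper_factor_def by blast
        then show "z \<in> Wellfounded.acc (rw_factor_order X R)"
        proof cases
          case 1
          have "(x, a @ z @ b) \<in> rw_step X R"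
            using rw_step_context[OF 1, of a b] less.prems by simp
          then show ?thesis using "1.IH" rw_step_in_lists(2)[OF _ R] by blast
        next
          case (2 c d)
          then show ?thesis using less.hyps[of z "a @ c" "d @ b"] less.prems by simp
        qed
      qed
    qed
  qed
  show ?thesis unfolding wf_iff_acc
  proof
    fix y show "y \<in> Wellfounded.acc (rw_factor_order X R)"
    proof (cases "y \<in> lists X")
      case True then show ?thesis using factor_acc[of y "[]" y "[]"] by simp
    next
      case False
      have "(z, y) \<notin> rw_factor_order X R" for z
        using False rw_step_in_lists[OF _ R]
        unfolding rw_factor_order_def proper_factor_def by auto
      then show ?thesis by (blast intro: accI)
    qed
  qed
qed

definition irred :: "nat set \<Rightarrow> (nat list \<times> nat list) set \<Rightarrow> nat list \<Rightarrow> bool" where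
  "irred X R w \<longleftrightarrow> (\<nexists>w'. (w, w') \<in> rw_step X R)"

lemma irred_rtrancl_eq: "irred X R x \<Longrightarrow> (x, y) \<in> (rw_step X R)\<^sup>* \<Longrightarrow> y = x"
  unfolding irred_def by (erule converse_rtranclE) auto

lemma rw_normal_form_exists:
  assumes "rw_noetherian X R"
  obtains y where "(x, y) \<in> (rw_step X R)\<^sup>*" "irred X R y"
proof -
  have "\<exists>y. (x, y) \<in> (rw_step X R)\<^sup>* \<and> irred X R y"
  proof (induction x rule: wf_induct[OF assms[unfolded rw_noetherian_wf]])
    case (1 x)
    show ?case
    proof (cases "irred X R x")
      case False
      then obtain x' where "(x, x') \<in> rw_step X R" unfolding irred_def by blast
      with 1 show ?thesis by (meson converse_rtrancl_into_rtrancl converseI)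
    qed blast
  qed
  with that show ?thesis by blast
qed

lemma rw_church_rosser:
  assumes "rw_confluent X R" "(x, y) \<in> (rw_step X R \<union> (rw_step X R)\<inverse>)\<^sup>*"
  obtains z where "(x, z) \<in> (rw_step X R)\<^sup>*" "(y, z) \<in> (rw_step X R)\<^sup>*"
proof -
  from assms(2) have "\<exists>z. (x, z) \<in> (rw_step X R)\<^sup>* \<and> (y, z) \<in> (rw_step X R)\<^sup>*"
  proof (induction rule: rtrancl_induct)
    case (step y y')
    then obtain z where z: "(x, z) \<in> (rw_step X R)\<^sup>*" "(y, z) \<in> (rw_step X R)\<^sup>*" by blast
    from step(2) show ?case
    proof
      assume "(y, y') \<in> rw_step X R"
      then obtain z' where "(z, z') \<in> (rw_step X R)\<^sup>*" "(y', z') \<in> (rw_step X R)\<^sup>*"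
        using assms(1) z(2) unfolding rw_confluent_def by (meson r_into_rtrancl)
      with z(1) show ?thesis by (meson rtrancl_trans)
    next
      assume "(y, y') \<in> (rw_step X R)\<inverse>"
      with z show ?thesis by (meson converse_rtrancl_into_rtrancl converseD)
    qed
  qed blast
  with that show ?thesis by blast
qed

definition pres_map :: "nat set \<Rightarrow> (nat list \<times> nat list) set \<Rightarrow> 'a set \<Rightarrow> ('a \<Rightarrow> 'a \<Rightarrow> 'a)
    \<Rightarrow> (nat list \<Rightarrow> 'a) \<Rightarrow> bool" where
  "pres_map X R S f \<psi> \<longleftrightarrow>
     (\<forall>w\<in>lists X - {[]}. \<psi> w \<in> S) \<and>
     (\<forall>w1\<in>lists X - {[]}. \<forall>w2\<in>lists X - {[]}. \<psi> (w1 @ w2) = f (\<psi> w1) (\<psi> w2)) \<and>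
     S \<subseteq> \<psi> ` (lists X - {[]}) \<and>
     (\<forall>w1\<in>lists X - {[]}. \<forall>w2\<in>lists X - {[]}.
        \<psi> w1 = \<psi> w2 \<longleftrightarrow> (w1, w2) \<in> (rw_step X R \<union> (rw_step X R)\<inverse>)\<^sup>*)"

lemma presents_iff_pres_map: "presents X R S f \<longleftrightarrow> (\<exists>\<psi>. pres_map X R S f \<psi>)"
  unfolding presents_def pres_map_def by blast

lemma pres_map_rtrancl_eq:
  assumes "pres_map X R S f \<psi>" "rules_over X R" "(x, y) \<in> (rw_step X R)\<^sup>*" "x \<in> lists X" "x \<noteq> []"
  shows "\<psi> x = \<psi> y"
proof -
  have "y \<in> lists X - {[]}" using rtrancl_rw_step_in_lists[OF assms(3,2,4,5)] by simp
  moreover have "(x, y) \<in> (rw_step X R \<union> (rw_step X R)\<inverse>)\<^sup>*" using assms(3) by (meson in_rtrancl_UnI)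
  ultimately show ?thesis using assms(1,4,5) unfolding pres_map_def by blast
qed

lemma pres_map_irred_unique:
  assumes "finite_complete_rws X R" "pres_map X R S f \<psi>"
    and "x \<in> lists X - {[]}" "y \<in> lists X - {[]}" "irred X R x" "irred X R y" "\<psi> x = \<psi> y"
  shows "x = y"
proof -
  have "(x, y) \<in> (rw_step X R \<union> (rw_step X R)\<inverse>)\<^sup>*" using assms(2-4,7) unfolding pres_map_def by blast
  then obtain z where "(x, z) \<in> (rw_step X R)\<^sup>*" "(y, z) \<in> (rw_step X R)\<^sup>*"
    using assms(1) rw_church_rosser unfolding finite_complete_rws_def by blast
  then show ?thesis using irred_rtrancl_eq assms(5,6) by metis
qed

lemma pres_map_irred_exists:
  assumes "finite_complete_rws X R" "pres_map X R S f \<psi>" "g \<in> S"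
  obtains w where "w \<in> lists X" "w \<noteq> []" "irred X R w" "\<psi> w = g"
proof -
  obtain w0 where w0: "w0 \<in> lists X" "w0 \<noteq> []" "\<psi> w0 = g" using assms(2,3) unfolding pres_map_def by blast
  obtain w where w: "(w0, w) \<in> (rw_step X R)\<^sup>*" "irred X R w"
    using assms(1) rw_normal_form_exists unfolding finite_complete_rws_def by blast
  have R: "rules_over X R" using assms(1) by (rule finite_complete_rws_rules_over)
  show ?thesis
    using that rtrancl_rw_step_in_lists[OF w(1) R w0(1,2)] w(2) pres_map_rtrancl_eq[OF assms(2) R w(1) w0(1,2)] w0(3)
    by metis
qed

lemma complete_presentation_by_normal_forms:
  assumes R: "rules_over X R" and noeth: "rw_noetherian X R"
    and into: "\<forall>w\<in>lists X - {[]}. \<psi> w \<in> S"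
    and hom: "\<forall>w1\<in>lists X - {[]}. \<forall>w2\<in>lists X - {[]}. \<psi> (w1 @ w2) = f (\<psi> w1) (\<psi> w2)"
    and onto: "S \<subseteq> \<psi> ` (lists X - {[]})"
    and rules: "\<forall>(u, v)\<in>R. \<psi> u = \<psi> v"
    and unique: "\<forall>x\<in>lists X - {[]}. \<forall>y\<in>lists X - {[]}. irred X R x \<longrightarrow> irred X R y \<longrightarrow> \<psi> x = \<psi> y \<longrightarrow> x = y"
  shows "rw_confluent X R" "pres_map X R S f \<psi>"
proof -
  let ?s = "rw_step X R"
  have mult: "\<psi> (w1 @ w2) = f (\<psi> w1) (\<psi> w2)"
    if "w1 \<in> lists X" "w1 \<noteq> []" "w2 \<in> lists X" "w2 \<noteq> []" for w1 w2
    using hom that by blast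
  have step_eq: "\<psi> x = \<psi> y" if "(x, y) \<in> ?s" for x y
    using that
  proof (rule rw_stepE)
    fix p u v q assume x: "x = p @ u @ q" "y = p @ v @ q" "(u, v) \<in> R" "p \<in> lists X" "q \<in> lists X"
    have uv: "u \<in> lists X - {[]}" "v \<in> lists X - {[]}" using R x(3) unfolding rules_over_def by auto
    have "\<psi> u = \<psi> v" using rules x(3) by blast
    then have "\<psi> (u @ q) = \<psi> (v @ q)"
      using uv x(5) mult by (cases "q = []") auto
    moreover have "u @ q \<in> lists X - {[]}" "v @ q \<in> lists X - {[]}" using uv x(5) by auto
    ultimately show ?thesis using x(1,2,4) mult by (cases "p = []") auto
  qed
  have steps: "\<psi> x = \<psi> y" if "(x, y) \<in> ?s\<^sup>*" for x y
    using that by induction (auto dest: step_eq)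
  have join: "\<exists>z. (x, z) \<in> ?s\<^sup>* \<and> (y, z) \<in> ?s\<^sup>*"
    if "x \<in> lists X - {[]}" "y \<in> lists X - {[]}" "\<psi> x = \<psi> y" for x y
  proof -
    obtain x' where x': "(x, x') \<in> ?s\<^sup>*" "irred X R x'" using noeth by (rule rw_normal_form_exists)
    obtain y' where y': "(y, y') \<in> ?s\<^sup>*" "irred X R y'" using noeth by (rule rw_normal_form_exists)
    have "x' \<in> lists X - {[]}" "y' \<in> lists X - {[]}"
      using rtrancl_rw_step_in_lists[OF x'(1) R] rtrancl_rw_step_in_lists[OF y'(1) R] that by auto
    moreover have "\<psi> x' = \<psi> y'" using steps[OF x'(1)] steps[OF y'(1)] that(3) by simp
    ultimately have "x' = y'" using unique x'(2) y'(2) by blast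
    with x' y' show ?thesis by blast
  qed
  show "rw_confluent X R"
    unfolding rw_confluent_def
  proof (intro allI impI, elim conjE)
    fix u v v' assume uv: "(u, v) \<in> ?s\<^sup>*" and uv': "(u, v') \<in> ?s\<^sup>*"
    show "\<exists>w. (v, w) \<in> ?s\<^sup>* \<and> (v', w) \<in> ?s\<^sup>*"
    proof (cases "u \<in> lists X - {[]}")
      case True
      have "v \<in> lists X - {[]}" "v' \<in> lists X - {[]}" "\<psi> v = \<psi> v'"
        using rtrancl_rw_step_in_lists[OF uv R] rtrancl_rw_step_in_lists[OF uv' R] True
          steps[OF uv] steps[OF uv'] by auto
      then show ?thesis using join by blast
    next
      case False
      then have "irred X R u" using rw_step_in_lists[OF _ R] unfolding irred_def by blast
      then have "v = u" "v' = u" using uv uv' by (simp_all add: irred_rtrancl_eq)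
      then show ?thesis by blast
    qed
  qed
  have conv: "y \<in> lists X - {[]} \<and> \<psi> y = \<psi> x"
    if "(x, y) \<in> (?s \<union> ?s\<inverse>)\<^sup>*" and x: "x \<in> lists X - {[]}" for x y
    using that(1)
  proof induction
    case (step y z)
    then have "y \<in> lists X - {[]}" "\<psi> y = \<psi> x" by auto
    with step(2) show ?case using rw_step_in_lists[OF _ R] step_eq by fastforce
  qed (use x in simp)
  show "pres_map X R S f \<psi>"
    unfolding pres_map_def
  proof (intro conjI into hom onto ballI iffI)
    fix x y assume xy: "x \<in> lists X - {[]}" "y \<in> lists X - {[]}"
    {
      assume "\<psi> x = \<psi> y"
      then obtain z where "(x, z) \<in> ?s\<^sup>*" "(y, z) \<in> ?s\<^sup>*" using join xy by blast
      moreover from this(2) have "(z, y) \<in> (?s\<inverse>)\<^sup>*" by (simp add: rtrancl_converse)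
      ultimately show "(x, y) \<in> (?s \<union> ?s\<inverse>)\<^sup>*" by (meson in_rtrancl_UnI rtrancl_trans)
    next
      assume "(x, y) \<in> (?s \<union> ?s\<inverse>)\<^sup>*"
      then show "\<psi> x = \<psi> y" using conv xy by metis
    }
  qed
qed

lemma finite_image_factor:
  assumes "finite (k ` A)" "\<And>x y. x \<in> A \<Longrightarrow> y \<in> A \<Longrightarrow> k x = k y \<Longrightarrow> h x = h y"
  shows "finite (h ` A)"
proof -
  define g where "g I = h (SOME x. x \<in> A \<and> k x = I)" for I
  have "h x = g (k x)" if "x \<in> A" for x
  proof -
    have "(SOME x'. x' \<in> A \<and> k x' = k x) \<in> A \<and> k (SOME x'. x' \<in> A \<and> k x' = k x) = k x"
      by (rule someI[of _ x]) (use that in simp)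
    then show ?thesis unfolding g_def using assms(2)[OF that] by simp
  qed
  then have "h ` A = g ` (k ` A)" by (simp add: image_image cong: image_cong)
  then show ?thesis using assms(1) by simp
qed

lemma down_set_eq_iff:
  assumes refl: "\<And>x. x \<in> S \<Longrightarrow> le x x"
    and trans: "\<And>x y z. le x y \<Longrightarrow> le y z \<Longrightarrow> z \<in> S \<Longrightarrow> le x z"
    and "x \<in> S" "y \<in> S"
  shows "{z\<in>S. le z x} = {z\<in>S. le z y} \<longleftrightarrow> le x y \<and> le y x"
proof
  assume eq: "{z\<in>S. le z x} = {z\<in>S. le z y}"
  have "x \<in> {z\<in>S. le z x}" "y \<in> {z\<in>S. le z y}" using assms(3,4) refl by simp_all
  then have "x \<in> {z\<in>S. le z y}" "y \<in> {z\<in>S. le z x}" by (simp_all only: eq)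
  then show "le x y \<and> le y x" by simp
next
  assume "le x y \<and> le y x"
  then show "{z\<in>S. le z x} = {z\<in>S. le z y}" using assms(3,4) by (auto intro: trans)
qed

text \<open>\<open>blocks P w\<close> cuts \<open>w\<close> at the letters not satisfying \<open>P\<close>; the pieces are the maximal
  \<open>P\<close>-segments, empty ones included.\<close>

fun blocks :: "('b \<Rightarrow> bool) \<Rightarrow> 'b list \<Rightarrow> 'b list list" where
  "blocks P [] = [[]]"
| "blocks P (x # w) = (if P x then (x # hd (blocks P w)) # tl (blocks P w) else [] # blocks P w)"

definition nonempty_mset :: "'b list list \<Rightarrow> 'b list multiset" where
  "nonempty_mset xs = mset (filter (\<lambda>x. x \<noteq> []) xs)"

definition block_mset :: "('b \<Rightarrow> bool) \<Rightarrow> 'b list \<Rightarrow> 'b list multiset" where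
  "block_mset P w = nonempty_mset (blocks P w)"

lemma nonempty_mset_simps [simp]:
  "nonempty_mset [] = {#}"
  "nonempty_mset (x # xs) = (if x = [] then {#} else {#x#}) + nonempty_mset xs"
  "nonempty_mset (xs @ ys) = nonempty_mset xs + nonempty_mset ys"
  "nonempty_mset (replicate n []) = {#}"
  unfolding nonempty_mset_def by (simp_all add: filter_replicate)

lemma blocks_not_Nil: "blocks P w \<noteq> []"
  by (cases w) auto

lemma blocks_append:
  "blocks P (u @ v) = butlast (blocks P u) @ [last (blocks P u) @ hd (blocks P v)] @ tl (blocks P v)"
proof (induction u)
  case Nil then show ?case using blocks_not_Nil[of P v] by simp
next
  case (Cons x u)
  obtain b bs where "blocks P u = b # bs" using blocks_not_Nil[of P u] by (cases "blocks P u") auto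
  with Cons.IH show ?case by (cases bs) auto
qed

lemma blocks_all: "v \<noteq> [] \<Longrightarrow> \<forall>x\<in>set v. P x \<Longrightarrow> blocks P v = [v]"
  by (induction v rule: induct_list012) auto

lemma blocks_none: "\<forall>x\<in>set v. \<not> P x \<Longrightarrow> blocks P v = replicate (Suc (length v)) []"
  by (induction v) auto

lemma blocks_all_P: "b \<in> set (blocks P w) \<Longrightarrow> \<forall>x\<in>set b. P x"
proof (induction w arbitrary: b)
  case (Cons y w)
  have "hd (blocks P w) \<in> set (blocks P w)" "set (tl (blocks P w)) \<subseteq> set (blocks P w)"
    using blocks_not_Nil[of P w] by (simp_all add: list.set_sel(2) subsetI)
  with Cons show ?case by (auto split: if_splits)
qed simp

lemma blocks_ends_all_P:
  "\<forall>x\<in>set (last (blocks P w)). P x" "\<forall>x\<in>set (hd (blocks P w)). P x"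
  using blocks_all_P blocks_not_Nil by (metis last_in_set, metis list.set_sel(1))

lemma blocks_context:
  "blocks P w1 = butlast (blocks P w1) @ [last (blocks P w1)]"
  "blocks P w2 = [hd (blocks P w2)] @ tl (blocks P w2)"
  using blocks_not_Nil[of P] by (simp_all add: append_butlast_last_id)

lemma blocks_append_all:
  assumes "m \<noteq> []" "\<forall>x\<in>set m. P x"
  shows "blocks P (w1 @ m @ w2)
    = butlast (blocks P w1) @ [last (blocks P w1) @ m @ hd (blocks P w2)] @ tl (blocks P w2)"
  using blocks_append[of P w1 "m @ w2"] blocks_append[of P m w2] blocks_all[OF assms] by simp

lemma block_mset_context:
  "block_mset P w1 = nonempty_mset (butlast (blocks P w1)) + nonempty_mset [last (blocks P w1)]"
  "block_mset P w2 = nonempty_mset [hd (blocks P w2)] + nonempty_mset (tl (blocks P w2))"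
  unfolding block_mset_def nonempty_mset_simps(3)[symmetric]
  by (rule arg_cong[OF blocks_context(1)], rule arg_cong[OF blocks_context(2)])

lemma block_mset_append_none:
  assumes "m \<noteq> []" "\<forall>x\<in>set m. \<not> P x"
  shows "block_mset P (w1 @ m @ w2) = block_mset P w1 + block_mset P w2"
proof -
  obtain k where k: "length m = Suc k" using assms(1) by (cases m) auto
  have "blocks P m = replicate (Suc k) [] @ [[]]"
    using blocks_none[OF assms(2)] k by (simp add: replicate_append_same)
  then have "blocks P (m @ w2) = replicate (Suc k) [] @ [hd (blocks P w2)] @ tl (blocks P w2)"
    using blocks_append[of P m w2] by simp
  then have "blocks P (w1 @ m @ w2) = butlast (blocks P w1) @ [last (blocks P w1)] @ replicate k []
      @ [hd (blocks P w2)] @ tl (blocks P w2)"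
    using blocks_append[of P w1 "m @ w2"] by simp
  then show ?thesis using block_mset_context(1)[of P w1] block_mset_context(2)[of P w2] unfolding block_mset_def by (simp add: add_ac)
qed

lemma block_mset_replace_inside:
  assumes "u \<noteq> []" "v \<noteq> []" "\<forall>x\<in>set u. P x" "\<forall>x\<in>set v. P x"
    and less: "\<And>p q. \<forall>x\<in>set p. P x \<Longrightarrow> \<forall>x\<in>set q. P x \<Longrightarrow> (p @ v @ q, p @ u @ q) \<in> r"
  shows "(block_mset P (w1 @ v @ w2), block_mset P (w1 @ u @ w2)) \<in> mult r"
proof -
  let ?p = "last (blocks P w1)" and ?q = "hd (blocks P w2)"
  let ?I = "nonempty_mset (butlast (blocks P w1)) + nonempty_mset (tl (blocks P w2))"
  have "(?p @ v @ ?q, ?p @ u @ ?q) \<in> r" by (rule less[OF blocks_ends_all_P(1,2)])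
  then have "(?I + {#?p @ v @ ?q#}, ?I + {#?p @ u @ ?q#}) \<in> mult r" by (intro one_step_implies_mult) auto
  moreover have "block_mset P (w1 @ v @ w2) = ?I + {#?p @ v @ ?q#}" "block_mset P (w1 @ u @ w2) = ?I + {#?p @ u @ ?q#}"
    unfolding block_mset_def blocks_append_all[OF assms(1,3)] blocks_append_all[OF assms(2,4)]
    using assms(1,2) by (simp_all add: add_ac)
  ultimately show ?thesis by simp
qed

lemma block_mset_replace_pair:
  assumes v: "v \<noteq> []" "\<forall>x\<in>set v. \<not> P x" and cd: "P c \<or> P d"
    and factor: "\<And>a y b. \<forall>x\<in>set (a @ y @ b). P x \<Longrightarrow> a @ b \<noteq> [] \<Longrightarrow> (y, a @ y @ b) \<in> r"
  shows "(block_mset P (w1 @ v @ w2), block_mset P (w1 @ [c, d] @ w2)) \<in> mult r"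
proof -
  let ?p = "last (blocks P w1)" and ?q = "hd (blocks P w2)"
  let ?I = "nonempty_mset (butlast (blocks P w1)) + nonempty_mset (tl (blocks P w2))"
  note pq = blocks_ends_all_P(1)[of P w1] blocks_ends_all_P(2)[of P w2]
  have new: "block_mset P (w1 @ v @ w2) = ?I + nonempty_mset [?p] + nonempty_mset [?q]"
    unfolding block_mset_append_none[OF v] using block_mset_context(1)[of P w1] block_mset_context(2)[of P w2]
    by (simp add: add_ac)
  consider "P c" "P d" | "P c" "\<not> P d" | "\<not> P c" "P d" using cd by blast
  then show ?thesis
  proof cases
    case 1
    have "\<forall>k\<in>#nonempty_mset [?p] + nonempty_mset [?q]. (k, ?p @ [c, d] @ ?q) \<in> r"
      using factor[of "[]" ?p "[c, d] @ ?q"] factor[of "?p @ [c, d]" ?q "[]"] pq 1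
      by (auto split: if_splits)
    then have "(?I + (nonempty_mset [?p] + nonempty_mset [?q]), ?I + {#?p @ [c, d] @ ?q#}) \<in> mult r"
      by (intro one_step_implies_mult) auto
    moreover have "block_mset P (w1 @ [c, d] @ w2) = ?I + {#?p @ [c, d] @ ?q#}"
      unfolding block_mset_def using blocks_append_all[of "[c, d]" P w1 w2] 1 by (simp add: add_ac)
    ultimately show ?thesis unfolding new by (simp add: add_ac)
  next
    case 2
    let ?J = "?I + nonempty_mset [?q]"
    have "\<forall>k\<in>#nonempty_mset [?p]. (k, ?p @ [c]) \<in> r"
      using factor[of "[]" ?p "[c]"] pq 2 by (auto split: if_splits)
    then have "(?J + nonempty_mset [?p], ?J + {#?p @ [c]#}) \<in> mult r" by (intro one_step_implies_mult) auto
    moreover have "blocks P (w1 @ [c, d] @ w2) = butlast (blocks P w1) @ [?p @ [c]] @ [?q] @ tl (blocks P w2)"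
      using blocks_append[of P w1 "[c, d] @ w2"] blocks_context(2)[of P w2] 2 by simp
    then have "block_mset P (w1 @ [c, d] @ w2) = ?J + {#?p @ [c]#}"
      unfolding block_mset_def by (simp add: add_ac)
    ultimately show ?thesis unfolding new by (simp add: add_ac)
  next
    case 3
    let ?J = "?I + nonempty_mset [?p]"
    have "\<forall>k\<in>#nonempty_mset [?q]. (k, d # ?q) \<in> r"
      using factor[of "[d]" ?q "[]"] pq 3 by (auto split: if_splits)
    then have "(?J + nonempty_mset [?q], ?J + {#d # ?q#}) \<in> mult r" by (intro one_step_implies_mult) auto
    moreover have "blocks P (w1 @ [c, d] @ w2) = butlast (blocks P w1) @ [?p] @ [d # ?q] @ tl (blocks P w2)"
      using blocks_append[of P w1 "[c, d] @ w2"] blocks_context(2)[of P w2] 3 by simp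
    then have "block_mset P (w1 @ [c, d] @ w2) = ?J + {#d # ?q#}"
      unfolding block_mset_def by (simp add: add_ac)
    ultimately show ?thesis unfolding new by (simp add: add_ac)
  qed
qed

lemma finite_range_max_infinitely_often:
  fixes k :: "nat \<Rightarrow> 'k::linorder"
  assumes fin: "finite (range k)"
  obtains m N where "infinite {n. k n = m}" "\<forall>n\<ge>N. k n \<le> m"
proof -
  define Inf where "Inf = {r \<in> range k. infinite {n. k n = r}}"
  have "Inf \<noteq> {}"
  proof
    assume "Inf = {}"
    then have "finite (\<Union>r\<in>range k. {n. k n = r})"
      unfolding Inf_def by (intro finite_UN_I[OF fin]) blast
    moreover have "(\<Union>r\<in>range k. {n. k n = r}) = UNIV" by blast
    ultimately show False by simp
  qed
  moreover have fin_Inf: "finite Inf" unfolding Inf_def using fin by simp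
  ultimately have "Max Inf \<in> Inf" by (rule Max_in[rotated])
  define m where "m = Max Inf"
  have fin_r: "finite {n. k n = r}" if "r \<in> range k" "r > m" for r
  proof (rule ccontr)
    assume "infinite {n. k n = r}"
    with that(1) have "r \<le> m" unfolding m_def Inf_def using Max_ge[OF fin_Inf[unfolded Inf_def]] by blast
    with that(2) show False by simp
  qed
  have "{n. k n > m} = (\<Union>r\<in>{r \<in> range k. r > m}. {n. k n = r})" by auto
  also have "finite \<dots>" using fin fin_r by (intro finite_UN_I) simp_all
  finally obtain N where N: "\<forall>n\<in>{n. k n > m}. n < N" using finite_nat_set_iff_bounded by blast
  have "k n \<le> m" if "N \<le> n" for n
  proof (rule ccontr)
    assume "\<not> k n \<le> m"
    then have "n < N" using N by simp
    with that show False by simp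
  qed
  moreover have "infinite {n. k n = m}" using \<open>Max Inf \<in> Inf\<close> unfolding m_def Inf_def by simp
  ultimately show ?thesis using that by blast
qed

lemma wf_not_frequently_descending:
  assumes wf: "wf r"
    and steps: "\<forall>n\<ge>N. M (Suc n) = M n \<or> (M (Suc n), M n) \<in> r"
    and often: "\<forall>n. \<exists>i\<ge>n. (M (Suc i), M i) \<in> r"
  shows False
proof -
  have below: "M j = M i \<or> (M j, M i) \<in> r\<^sup>+" if "N \<le> i" "i \<le> j" for i j
    using that(2)
  proof (induction j rule: dec_induct)
    case (step j)
    have "M (Suc j) = M j \<or> (M (Suc j), M j) \<in> r" using steps step.hyps(1) that(1) by simp
    with step.IH show ?case by (auto intro: trancl_into_trancl2)
  qed simp
  have "\<forall>i\<ge>N. M i \<noteq> m" for m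
  proof (induction m rule: wf_induct[OF wf_trancl[OF wf]])
    case (1 m)
    show ?case
    proof (intro allI impI notI)
      fix i assume i: "N \<le> i" "M i = m"
      obtain j where j: "j \<ge> i" "(M (Suc j), M j) \<in> r" using often by blast
      then have "(M (Suc j), m) \<in> r\<^sup>+" using below[OF i(1) j(1)] i(2) by (auto intro: trancl_into_trancl2)
      then have "\<forall>i\<ge>N. M i \<noteq> M (Suc j)" using 1 by blast
      moreover have "N \<le> Suc j" using i(1) j(1) by simp
      ultimately show False by blast
    qed
  qed
  then show False by blast
qed

lemma wf_lex_family:
  fixes rank :: "'i \<Rightarrow> 'k::linorder"
  assumes fin: "finite I" and inj: "inj_on rank I" and wf: "\<And>i. i \<in> I \<Longrightarrow> wf (r i)"
  shows "wf {(x, y). \<exists>i\<in>I. (g i x, g i y) \<in> r i \<and> (\<forall>j\<in>I. rank i < rank j \<longrightarrow> g j x = g j y)}"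
    (is "wf ?less")
  unfolding wf_iff_no_infinite_down_chain
proof
  assume "\<exists>s. \<forall>n. (s (Suc n), s n) \<in> ?less"
  then obtain s where "\<forall>n. \<exists>i. i \<in> I \<and> (g i (s (Suc n)), g i (s n)) \<in> r i
      \<and> (\<forall>j\<in>I. rank i < rank j \<longrightarrow> g j (s (Suc n)) = g j (s n))" by blast
  from choice[OF this] obtain idx where idx: "\<forall>n. idx n \<in> I \<and> (g (idx n) (s (Suc n)), g (idx n) (s n)) \<in> r (idx n)
      \<and> (\<forall>j\<in>I. rank (idx n) < rank j \<longrightarrow> g j (s (Suc n)) = g j (s n))" by blast
  have "finite (range (\<lambda>n. rank (idx n)))"
    by (rule finite_subset[OF _ finite_imageI[OF fin]]) (use idx in auto)
  then obtain m N where m: "infinite {n. rank (idx n) = m}" and N: "\<forall>n\<ge>N. rank (idx n) \<le> m"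
    by (rule finite_range_max_infinitely_often)
  obtain n0 where n0: "rank (idx n0) = m" using not_finite_existsD[OF m] by blast
  define i where "i = idx n0"
  have i: "i \<in> I" "rank i = m" unfolding i_def using idx n0 by simp_all
  have top: "idx n = i" if "rank (idx n) = m" for n
    using inj_onD[OF inj, of "idx n" i] idx i that by simp
  show False
  proof (rule wf_not_frequently_descending[OF wf[OF i(1)]])
    show "\<forall>n\<ge>N. g i (s (Suc n)) = g i (s n) \<or> (g i (s (Suc n)), g i (s n)) \<in> r i"
    proof (intro allI impI)
      fix n assume "N \<le> n"
      then consider "rank (idx n) = m" | "rank (idx n) < m" using N by fastforce
      then show "g i (s (Suc n)) = g i (s n) \<or> (g i (s (Suc n)), g i (s n)) \<in> r i"
      proof cases
        case 1 then show ?thesis using idx top by metis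
      next
        case 2 then show ?thesis using idx i by blast
      qed
    qed
    show "\<forall>n. \<exists>j\<ge>n. (g i (s (Suc j)), g i (s j)) \<in> r i"
    proof
      fix n
      obtain j where "j \<ge> n" "rank (idx j) = m" using m unfolding infinite_nat_iff_unbounded_le by blast
      then show "\<exists>j\<ge>n. (g i (s (Suc j)), g i (s j)) \<in> r i" using idx top by metis
    qed
  qed
qed

locale regular_fin_ideals =
  fixes S :: "'a set" and f :: "'a \<Rightarrow> 'a \<Rightarrow> 'a"
  assumes regular: "regular_semigroup S f"
    and finite_left_ideals: "finite {I. left_ideal S f I}"
    and finite_right_ideals: "finite {I. right_ideal S f I}"
begin

lemma closed [simp, intro]: "x \<in> S \<Longrightarrow> y \<in> S \<Longrightarrow> f x y \<in> S"
  using regular unfolding regular_semigroup_def semigroup_on_def by blast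

lemma assoc [simp]: "x \<in> S \<Longrightarrow> y \<in> S \<Longrightarrow> z \<in> S \<Longrightarrow> f (f x y) z = f x (f y z)"
  using regular unfolding regular_semigroup_def semigroup_on_def by blast

lemma regularE:
  assumes "x \<in> S"
  obtains y where "y \<in> S" "f (f x y) x = x"
  using regular assms unfolding regular_semigroup_def by blast

definition leR where "leR x y \<longleftrightarrow> (\<exists>t\<in>S. x = f y t)"
definition leL where "leL x y \<longleftrightarrow> (\<exists>t\<in>S. x = f t y)"
definition leJ where "leJ x y \<longleftrightarrow> (\<exists>s\<in>S. \<exists>t\<in>S. x = f (f s y) t)"
definition eqR where "eqR x y \<longleftrightarrow> leR x y \<and> leR y x"
definition eqL where "eqL x y \<longleftrightarrow> leL x y \<and> leL y x"
definition eqJ where "eqJ x y \<longleftrightarrow> leJ x y \<and> leJ y x"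

lemma leRI: "t \<in> S \<Longrightarrow> x = f y t \<Longrightarrow> leR x y"
  unfolding leR_def by blast

lemma leLI: "t \<in> S \<Longrightarrow> x = f t y \<Longrightarrow> leL x y"
  unfolding leL_def by blast

lemma leR_refl:
  assumes x: "x \<in> S" shows "leR x x"
proof -
  obtain y where y: "y \<in> S" "f (f x y) x = x" using x by (rule regularE)
  then have "x = f x (f y x)" using x by simp
  then show ?thesis unfolding leR_def using x y(1) by blast
qed

lemma leL_refl:
  assumes x: "x \<in> S" shows "leL x x"
proof -
  obtain y where y: "y \<in> S" "f (f x y) x = x" using x by (rule regularE)
  then show ?thesis unfolding leL_def using x closed by metis
qed

lemma leJ_refl:
  assumes x: "x \<in> S" shows "leJ x x"
proof -
  obtain y where y: "y \<in> S" "f (f x y) x = x" using x by (rule regularE)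
  have "f (f (f x y) x) (f y x) = f (f x y) (f (f x y) x)" using x y(1) by simp
  then have "x = f (f (f x y) x) (f y x)" using y(2) by simp
  then show ?thesis unfolding leJ_def using x y(1) by blast
qed

lemma leR_trans:
  assumes "leR x y" "leR y z" "z \<in> S" shows "leR x z"
proof -
  obtain t t' where "t \<in> S" "x = f y t" "t' \<in> S" "y = f z t'" using assms(1,2) unfolding leR_def by blast
  then have "x = f z (f t' t)" "f t' t \<in> S" using assms(3) by simp_all
  then show ?thesis unfolding leR_def by blast
qed

lemma leL_trans:
  assumes "leL x y" "leL y z" "z \<in> S" shows "leL x z"
proof -
  obtain t t' where "t \<in> S" "x = f t y" "t' \<in> S" "y = f t' z" using assms(1,2) unfolding leL_def by blast
  then have "x = f (f t t') z" "f t t' \<in> S" using assms(3) by simp_all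
  then show ?thesis unfolding leL_def by blast
qed

lemma leJ_trans: "leJ x y \<Longrightarrow> leJ y z \<Longrightarrow> z \<in> S \<Longrightarrow> leJ x z"
proof -
  assume "leJ x y" "leJ y z" "z \<in> S"
  then obtain s t s' t' where st: "s \<in> S" "t \<in> S" "x = f (f s y) t" "s' \<in> S" "t' \<in> S" "y = f (f s' z) t'"
    unfolding leJ_def by blast
  then have "x = f (f (f s s') z) (f t' t)" using \<open>z \<in> S\<close> by simp
  then show ?thesis unfolding leJ_def using st \<open>z \<in> S\<close> by blast
qed

lemma leR_in: "leR x y \<Longrightarrow> y \<in> S \<Longrightarrow> x \<in> S" unfolding leR_def by auto
lemma leL_in: "leL x y \<Longrightarrow> y \<in> S \<Longrightarrow> x \<in> S" unfolding leL_def by auto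
lemma leJ_in: "leJ x y \<Longrightarrow> y \<in> S \<Longrightarrow> x \<in> S" unfolding leJ_def by auto

lemma leR_leJ:
  assumes "leR x y" and y: "y \<in> S" shows "leJ x y"
proof -
  obtain t where t: "t \<in> S" "x = f y t" using assms(1) unfolding leR_def by blast
  obtain z where z: "z \<in> S" "f (f y z) y = y" using y by (rule regularE)
  have "x = f (f (f y z) y) t" using t z by simp
  then show ?thesis unfolding leJ_def using t z y by blast
qed

lemma leL_leJ:
  assumes "leL x y" and y: "y \<in> S" shows "leJ x y"
proof -
  obtain t where t: "t \<in> S" "x = f t y" using assms(1) unfolding leL_def by blast
  obtain z where z: "z \<in> S" "f (f y z) y = y" using y by (rule regularE)
  have "x = f t (f (f y z) y)" using t z by simp
  also have "\<dots> = f (f t y) (f z y)" using t z y by simp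
  finally show ?thesis unfolding leJ_def using t z y by blast
qed

lemma leR_mult: "x \<in> S \<Longrightarrow> y \<in> S \<Longrightarrow> leR (f x y) x" unfolding leR_def by blast
lemma leL_mult: "x \<in> S \<Longrightarrow> y \<in> S \<Longrightarrow> leL (f x y) y" unfolding leL_def by blast
lemma leJ_mult_left: "x \<in> S \<Longrightarrow> y \<in> S \<Longrightarrow> leJ (f x y) x" using leR_leJ leR_mult by blast
lemma leJ_mult_right: "x \<in> S \<Longrightarrow> y \<in> S \<Longrightarrow> leJ (f x y) y" using leL_leJ leL_mult by blast

lemma eqR_refl: "x \<in> S \<Longrightarrow> eqR x x" unfolding eqR_def using leR_refl by blast
lemma eqL_refl: "x \<in> S \<Longrightarrow> eqL x x" unfolding eqL_def using leL_refl by blast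
lemma eqR_sym: "eqR x y \<Longrightarrow> eqR y x" unfolding eqR_def by blast
lemma eqL_sym: "eqL x y \<Longrightarrow> eqL y x" unfolding eqL_def by blast
lemma eqJ_sym: "eqJ x y \<Longrightarrow> eqJ y x" unfolding eqJ_def by blast
lemma eqR_trans: "eqR x y \<Longrightarrow> eqR y z \<Longrightarrow> z \<in> S \<Longrightarrow> eqR x z"
  unfolding eqR_def by (metis leR_in leR_trans)
lemma eqJ_trans: "eqJ x y \<Longrightarrow> eqJ y z \<Longrightarrow> z \<in> S \<Longrightarrow> eqJ x z"
  unfolding eqJ_def by (metis leJ_in leJ_trans)
lemma eqR_eqJ: "eqR x y \<Longrightarrow> y \<in> S \<Longrightarrow> eqJ x y"
  unfolding eqR_def eqJ_def by (metis leR_in leR_leJ)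
lemma eqL_eqJ: "eqL x y \<Longrightarrow> y \<in> S \<Longrightarrow> eqJ x y"
  unfolding eqL_def eqJ_def by (metis leL_in leL_leJ)

definition R_ideal where "R_ideal y = {x\<in>S. leR x y}"
definition J_ideal where "J_ideal y = {x\<in>S. leJ x y}"

lemma finite_R_ideals: "finite (R_ideal ` S)"
proof (rule finite_subset[OF _ finite_right_ideals])
  show "R_ideal ` S \<subseteq> {I. right_ideal S f I}"
    unfolding right_ideal_def R_ideal_def using leR_refl leR_trans[OF leR_mult] by blast
qed

lemma finite_J_ideals: "finite (J_ideal ` S)"
proof (rule finite_subset[OF _ finite_left_ideals])
  show "J_ideal ` S \<subseteq> {I. left_ideal S f I}"
    unfolding left_ideal_def J_ideal_def using leJ_refl leJ_trans[OF leJ_mult_right] by blast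
qed

lemma R_ideal_eq_iff: "x \<in> S \<Longrightarrow> y \<in> S \<Longrightarrow> R_ideal x = R_ideal y \<longleftrightarrow> eqR x y"
  unfolding R_ideal_def eqR_def using down_set_eq_iff[of S leR] leR_refl leR_trans by blast

lemma J_ideal_eq_iff: "x \<in> S \<Longrightarrow> y \<in> S \<Longrightarrow> J_ideal x = J_ideal y \<longleftrightarrow> eqJ x y"
  unfolding J_ideal_def eqJ_def using down_set_eq_iff[of S leJ] leJ_refl leJ_trans by blast

lemma dual: "regular_fin_ideals S (\<lambda>x y. f y x)"
proof
  show "regular_semigroup S (\<lambda>x y. f y x)"
    unfolding regular_semigroup_def semigroup_on_def
  proof (intro conjI ballI)
    fix x assume x: "x \<in> S"
    then obtain y where "y \<in> S" "f (f x y) x = x" by (rule regularE)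
    then show "\<exists>y\<in>S. f x (f y x) = x" using x by auto
  qed simp_all
  have "{I. left_ideal S (\<lambda>x y. f y x) I} = {I. right_ideal S f I}"
    "{I. right_ideal S (\<lambda>x y. f y x) I} = {I. left_ideal S f I}"
    unfolding left_ideal_def right_ideal_def by simp_all
  then show "finite {I. left_ideal S (\<lambda>x y. f y x) I}" "finite {I. right_ideal S (\<lambda>x y. f y x) I}"
    using finite_left_ideals finite_right_ideals by simp_all
qed

lemma dual_leR: "regular_fin_ideals.leR S (\<lambda>x y. f y x) = leL"
  unfolding regular_fin_ideals.leR_def[OF dual] leL_def ..

lemma dual_leJ: "y \<in> S \<Longrightarrow> regular_fin_ideals.leJ S (\<lambda>x y. f y x) x y = leJ x y"
  unfolding regular_fin_ideals.leJ_def[OF dual] leJ_def by (auto simp del: assoc simp: assoc[symmetric])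

text \<open>From \<open>x = s (x y) t\<close> we get \<open>x = s\<^sup>n x (y t)\<^sup>n\<close>; the R-descending chain
  \<open>x (y t)\<^sup>n\<close> must stop since there are finitely many right ideals, and this gives \<open>x \<in> x y S\<close>.\<close>

lemma stable_R:
  assumes x: "x \<in> S" and y: "y \<in> S" and J: "leJ x (f x y)"
  shows "leR x (f x y)"
proof -
  obtain s t where st: "s \<in> S" "t \<in> S" "x = f (f s (f x y)) t" using J unfolding leJ_def by blast
  define z where "z = f y t"
  have z: "z \<in> S" using y st unfolding z_def by simp
  have xz: "x = f s (f x z)" using st x y unfolding z_def by simp
  define p where "p n = ((\<lambda>w. f w z) ^^ n) x" for n
  have p_Suc: "p (Suc n) = f (p n) z" for n unfolding p_def by simp
  have p_in: "p n \<in> S" for n by (induction n) (use x z p_Suc in \<open>auto simp: p_def\<close>)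
  have p_prefix: "\<exists>\<sigma>\<in>S. x = f \<sigma> (p (Suc n))" for n
  proof (induction n)
    case 0 then show ?case using xz st(1) by (auto simp: p_def)
  next
    case (Suc n)
    then obtain \<sigma> where \<sigma>: "\<sigma> \<in> S" "x = f \<sigma> (p (Suc n))" by blast
    have "x = f s (f (f \<sigma> (p (Suc n))) z)" using xz \<sigma>(2) by simp
    also have "\<dots> = f (f s \<sigma>) (p (Suc (Suc n)))" using \<sigma>(1) st(1) z p_in p_Suc by simp
    finally show ?case using \<sigma>(1) st(1) by blast
  qed
  have p_mono: "leR (p (n + k)) (p n)" for n k
  proof (induction k)
    case 0 show ?case using leR_refl p_in by simp
  next
    case (Suc k)
    have "leR (p (Suc (n + k))) (p (n + k))" unfolding p_Suc using leR_mult p_in z by blast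
    then show ?case using Suc leR_trans p_in by simp
  qed
  have "finite (range (\<lambda>n. R_ideal (p (Suc n))))"
    using finite_R_ideals by (rule finite_subset[rotated]) (use p_in in auto)
  then have "\<not> inj (\<lambda>n. R_ideal (p (Suc n)))" using finite_imageD infinite_UNIV_nat by blast
  then obtain a b where ab: "a \<noteq> b" "R_ideal (p (Suc a)) = R_ideal (p (Suc b))"
    unfolding inj_def by blast
  obtain n m where nm: "n < m" "R_ideal (p (Suc n)) = R_ideal (p (Suc m))"
  proof (cases "a < b")
    case True with that ab show ?thesis by blast
  next
    case False with that ab(1) ab(2)[symmetric] show ?thesis by (meson linorder_neqE_nat)
  qed
  then have "eqR (p (Suc n)) (p (Suc m))" using R_ideal_eq_iff p_in by blast
  moreover have "leR (p (Suc m)) (p (Suc (Suc n)))" using p_mono[of "Suc (Suc n)" "m - Suc n"] nm(1) by simp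
  ultimately have "leR (p (Suc n)) (p (Suc (Suc n)))" unfolding eqR_def using leR_trans p_in by blast
  then obtain r where r: "r \<in> S" "p (Suc n) = f (f (p (Suc n)) z) r" unfolding leR_def using p_Suc by auto
  obtain \<sigma> where \<sigma>: "\<sigma> \<in> S" "x = f \<sigma> (p (Suc n))" using p_prefix by blast
  have "x = f \<sigma> (f (f (p (Suc n)) z) r)" using \<sigma> r by simp
  also have "\<dots> = f (f (f \<sigma> (p (Suc n))) z) r" using \<sigma> r z p_in by simp
  also have "\<dots> = f (f x y) (f t r)" using \<sigma> x y st r unfolding z_def by simp
  finally show ?thesis unfolding leR_def using st r by blast
qed

lemma stable_L:
  assumes x: "x \<in> S" "y \<in> S" "leJ x (f y x)"
  shows "leL x (f y x)"
proof -
  interpret dual: regular_fin_ideals S "\<lambda>x y. f y x" by (rule dual)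
  show ?thesis using dual.stable_R[of x y] assms dual_leJ[of "f y x" x] unfolding dual_leR by simp
qed

lemma eqR_if_eqJ_mult: "x \<in> S \<Longrightarrow> y \<in> S \<Longrightarrow> eqJ (f x y) x \<Longrightarrow> eqR (f x y) x"
  unfolding eqR_def eqJ_def using stable_R leR_mult by blast

lemma eqL_if_eqJ_mult: "x \<in> S \<Longrightarrow> y \<in> S \<Longrightarrow> eqJ (f y x) x \<Longrightarrow> eqL (f y x) x"
  unfolding eqL_def eqJ_def using stable_L leL_mult by blast

definition idem where "idem e \<longleftrightarrow> e \<in> S \<and> f e e = e"

lemma idem_eqR_exists:
  assumes y: "y \<in> S" shows "\<exists>e. idem e \<and> eqR e y"
proof -
  obtain z where z: "z \<in> S" "f (f y z) y = y" using y by (rule regularE)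
  have "f (f y z) (f y z) = f (f (f y z) y) z" using y z(1) by simp
  then have "idem (f y z)" unfolding idem_def using y z by simp
  moreover have "leR y (f y z)" unfolding leR_def using z y closed by metis
  ultimately show ?thesis unfolding eqR_def using leR_mult y z(1) by blast
qed

definition J_idem where "J_idem y = (SOME e. idem e \<and> eqJ e y)"

lemma J_idem: "y \<in> S \<Longrightarrow> idem (J_idem y) \<and> eqJ (J_idem y) y"
  unfolding J_idem_def by (rule someI_ex) (use idem_eqR_exists eqR_eqJ in blast)

lemma J_idem_in: "y \<in> S \<Longrightarrow> J_idem y \<in> S"
  using J_idem idem_def by blast

lemma J_idem_cong:
  assumes "y \<in> S" "y' \<in> S" "eqJ y y'" shows "J_idem y = J_idem y'"
proof -
  have "(\<lambda>e. idem e \<and> eqJ e y) = (\<lambda>e. idem e \<and> eqJ e y')"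
    using assms eqJ_trans eqJ_sym unfolding idem_def by blast
  then show ?thesis unfolding J_idem_def by simp
qed

lemma J_idem_J_idem: "y \<in> S \<Longrightarrow> J_idem (J_idem y) = J_idem y"
  using J_idem_cong J_idem J_idem_in by blast

definition E where "E = J_idem ` S"

lemma finite_E: "finite E"
  unfolding E_def
  by (rule finite_image_factor[OF finite_J_ideals]) (use J_idem_cong J_ideal_eq_iff in blast)

lemma E_idem: "e \<in> E \<Longrightarrow> idem e" unfolding E_def using J_idem by blast
lemma E_in: "e \<in> E \<Longrightarrow> e \<in> S" using E_idem idem_def by blast
lemma J_idem_E: "e \<in> E \<Longrightarrow> J_idem e = e" unfolding E_def using J_idem_J_idem by blast
lemma J_idem_in_E: "y \<in> S \<Longrightarrow> J_idem y \<in> E" unfolding E_def by blast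

definition H where "H e = {g\<in>S. eqR g e \<and> eqL g e}"

lemma idem_left_unit: "idem e \<Longrightarrow> leR g e \<Longrightarrow> f e g = g"
  unfolding idem_def leR_def by (metis assoc)

lemma idem_right_unit: "idem e \<Longrightarrow> leL g e \<Longrightarrow> f g e = g"
  unfolding idem_def leL_def by (metis assoc)

lemma H_unit: "idem e \<Longrightarrow> g \<in> H e \<Longrightarrow> f e g = g \<and> f g e = g"
  unfolding H_def eqR_def eqL_def using idem_left_unit idem_right_unit by blast

lemma H_in: "g \<in> H e \<Longrightarrow> g \<in> S"
  unfolding H_def by blast

lemma idem_in_H: "idem e \<Longrightarrow> e \<in> H e"
  unfolding H_def idem_def using eqR_refl eqL_refl by blast

lemma H_mult:
  assumes e: "idem e" and g: "g \<in> H e" and h: "h \<in> H e"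
  shows "f g h \<in> H e"
proof -
  have S: "e \<in> S" "g \<in> S" "h \<in> S" using e g h unfolding idem_def H_def by auto
  have u: "f g e = g" "f e h = h" using H_unit e g h by auto
  obtain s where s: "s \<in> S" "e = f g s" using g unfolding H_def eqR_def leR_def by blast
  obtain s' where s': "s' \<in> S" "e = f h s'" using h unfolding H_def eqR_def leR_def by blast
  obtain t where t: "t \<in> S" "e = f t h" using h unfolding H_def eqL_def leL_def by blast
  obtain t' where t': "t' \<in> S" "e = f t' g" using g unfolding H_def eqL_def leL_def by blast
  have "leR (f g h) e" using leR_trans[OF leR_mult] S g unfolding H_def eqR_def by blast
  moreover have "leL (f g h) e" using leL_trans[OF leL_mult] S h unfolding H_def eqL_def by blast
  moreover have R_eq: "f (f g h) (f s' s) = e"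
  proof -
    have "f (f g h) (f s' s) = f (f g (f h s')) s" using S s(1) s'(1) by simp
    also have "\<dots> = e" by (simp only: s'(2)[symmetric] u(1) s(2)[symmetric])
    finally show ?thesis .
  qed
  moreover have L_eq: "f (f t t') (f g h) = e"
  proof -
    have "f (f t t') (f g h) = f t (f (f t' g) h)" using S t(1) t'(1) by simp
    also have "\<dots> = e" by (simp only: t'(2)[symmetric] u(2) t(2)[symmetric])
    finally show ?thesis .
  qed
  moreover have "leR e (f g h)" using leRI[OF _ R_eq[symmetric]] s(1) s'(1) by simp
  moreover have "leL e (f g h)" using leLI[OF _ L_eq[symmetric]] t(1) t'(1) by simp
  ultimately show ?thesis unfolding H_def eqR_def eqL_def using S by simp
qed

lemma H_inverse:
  assumes e: "idem e" and g: "g \<in> H e"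
  shows "\<exists>h\<in>H e. f g h = e \<and> f h g = e"
proof -
  have S: "e \<in> S" "g \<in> S" using e g unfolding idem_def H_def by auto
  have u: "f e g = g" "f g e = g" "f e e = e" using H_unit[OF e g] e unfolding idem_def by auto
  obtain s where s: "s \<in> S" "e = f g s" using g unfolding H_def eqR_def leR_def by blast
  obtain t where t: "t \<in> S" "e = f t g" using g unfolding H_def eqL_def leL_def by blast
  define h where "h = f e (f t e)"
  have hS: "h \<in> S" unfolding h_def using S t by simp
  have hg: "f h g = e"
  proof -
    have "f h g = f e (f t g)" unfolding h_def using S t(1) u by simp
    also have "\<dots> = e" by (simp only: t(2)[symmetric] u(3))
    finally show ?thesis .
  qed
  have gh: "f g h = e"
  proof -
    have "f g h = f (f g e) (f t e)" unfolding h_def using S t(1) by simp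
    also have "\<dots> = f (f g t) (f g s)" using S t(1) by (simp add: u(2) s(2)[symmetric])
    also have "\<dots> = f (f g (f t g)) s" using S s(1) t(1) by simp
    also have "\<dots> = e" by (simp only: t(2)[symmetric] u(2) s(2)[symmetric])
    finally show ?thesis .
  qed
  have "leR h e" using leRI[of "f t e" h e] S t(1) unfolding h_def by simp
  moreover have "leL h e" using leLI[of "f e t" h e] S t(1) unfolding h_def by simp
  moreover have "leR e h" "leL e h" using leRI[OF _ hg[symmetric]] leLI[OF _ gh[symmetric]] S by simp_all
  ultimately have "h \<in> H e" unfolding H_def eqR_def eqL_def using hS by blast
  then show ?thesis using gh hg by blast
qed

lemma H_subgroup:
  assumes e: "idem e" shows "subgroup_of S f (H e)"
  unfolding subgroup_of_def
proof (intro conjI)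
  show "H e \<subseteq> S" using H_in by blast
  show "H e \<noteq> {}" using idem_in_H e by blast
  show "\<forall>x\<in>H e. \<forall>y\<in>H e. f x y \<in> H e" using H_mult e by blast
  show "\<exists>u\<in>H e. (\<forall>x\<in>H e. f u x = x \<and> f x u = x) \<and> (\<forall>x\<in>H e. \<exists>y\<in>H e. f x y = u \<and> f y x = u)"
  proof (rule bexI[of _ e])
    show "(\<forall>x\<in>H e. f e x = x \<and> f x e = x) \<and> (\<forall>x\<in>H e. \<exists>y\<in>H e. f x y = e \<and> f y x = e)"
      using H_unit[OF e] H_inverse[OF e] by blast
  qed (rule idem_in_H[OF e])
qed

lemma H_maximal:
  assumes e: "idem e" shows "maximal_subgroup S f (H e)"
  unfolding maximal_subgroup_def
proof (intro conjI allI impI)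
  show "subgroup_of S f (H e)" using H_subgroup e by blast
  fix K assume K: "subgroup_of S f K \<and> H e \<subseteq> K"
  then obtain e' where e': "e' \<in> K" "\<forall>x\<in>K. f e' x = x \<and> f x e' = x" "\<forall>x\<in>K. \<exists>y\<in>K. f x y = e' \<and> f y x = e'"
    and KS: "K \<subseteq> S" unfolding subgroup_of_def by blast
  have eK: "e \<in> K" using K idem_in_H e by blast
  have eS: "e \<in> S" "f e e = e" using e unfolding idem_def by auto
  txt \<open>The identity of \<open>K\<close> is an idempotent of \<open>K\<close>, hence equal to \<open>e\<close>.\<close>
  obtain y where y: "y \<in> K" "f e y = e'" "f y e = e'" using e' eK by blast
  have yS: "y \<in> S" using y(1) KS by blast
  have "e' = f y e" using y(3) by simp
  also have "\<dots> = f (f y e) e" using yS eS by simp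
  also have "\<dots> = f e' e" using y(3) by simp
  also have "\<dots> = e" using e'(2) eK by blast
  finally have e'_eq: "e' = e" .
  show "K = H e"
  proof
    show "K \<subseteq> H e"
    proof
      fix k assume k: "k \<in> K"
      obtain z where z: "z \<in> K" "f k z = e" "f z k = e" using e' k e'_eq by blast
      have "k = f e k" "k = f k e" using e' k e'_eq by auto
      moreover have "k \<in> S" "z \<in> S" using k z(1) KS by auto
      ultimately have "leR k e" "leL k e" "leR e k" "leL e k"
        using leRI[of k k e] leLI[of k k e] leRI[of z e k] leLI[of z e k] z(2,3) by simp_all
      then show "k \<in> H e" unfolding H_def eqR_def eqL_def using \<open>k \<in> S\<close> by blast
    qed
  qed (use K in blast)
qed

lemma dual_leL: "regular_fin_ideals.leL S (\<lambda>x y. f y x) = leR"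
  unfolding regular_fin_ideals.leL_def[OF dual] leR_def ..

lemma dual_eqR: "regular_fin_ideals.eqR S (\<lambda>x y. f y x) = eqL"
  unfolding regular_fin_ideals.eqR_def[OF dual] eqL_def dual_leR ..

lemma dual_eqL: "regular_fin_ideals.eqL S (\<lambda>x y. f y x) = eqR"
  unfolding regular_fin_ideals.eqL_def[OF dual] eqR_def dual_leL ..

lemma dual_eqJ: "x \<in> S \<Longrightarrow> y \<in> S \<Longrightarrow> regular_fin_ideals.eqJ S (\<lambda>x y. f y x) x y = eqJ x y"
  unfolding regular_fin_ideals.eqJ_def[OF dual] eqJ_def using dual_leJ by simp

lemma dual_J_idem: "y \<in> S \<Longrightarrow> regular_fin_ideals.J_idem S (\<lambda>x y. f y x) y = J_idem y"
proof -
  assume y: "y \<in> S"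
  have "regular_fin_ideals.idem S (\<lambda>x y. f y x) = idem"
    unfolding regular_fin_ideals.idem_def[OF dual] idem_def ..
  moreover have "idem e \<Longrightarrow> regular_fin_ideals.eqJ S (\<lambda>x y. f y x) e y = eqJ e y" for e
    using dual_eqJ y unfolding idem_def by blast
  ultimately show ?thesis
    unfolding regular_fin_ideals.J_idem_def[OF dual] J_idem_def by metis
qed

lemma dual_E: "regular_fin_ideals.E S (\<lambda>x y. f y x) = E"
  unfolding regular_fin_ideals.E_def[OF dual] E_def using dual_J_idem by simp

definition lrep where
  "lrep y = (if eqR y (J_idem y) then J_idem y else SOME a. a \<in> S \<and> eqR a y \<and> eqL a (J_idem y))"

definition rrep where "rrep = regular_fin_ideals.lrep S (\<lambda>x y. f y x)"

lemma lrep_exists: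
  assumes y: "y \<in> S" shows "\<exists>a. a \<in> S \<and> eqR a y \<and> eqL a (J_idem y)"
proof -
  let ?e = "J_idem y"
  have e: "?e \<in> S" "eqJ ?e y" using J_idem J_idem_in y by auto
  then obtain u v where uv: "u \<in> S" "v \<in> S" "y = f (f u ?e) v" unfolding eqJ_def leJ_def by blast
  let ?a = "f u ?e"
  have a: "?a \<in> S" using uv e by simp
  have y_av: "y = f ?a v" using uv by simp
  have "leJ y ?a" using leR_leJ[OF leR_mult[OF a uv(2)] a] by (simp only: y_av[symmetric])
  then have "leJ ?e ?a" using e a leJ_trans unfolding eqJ_def by blast
  then have "eqJ ?a ?e" unfolding eqJ_def using leJ_mult_right uv(1) e(1) by blast
  then have aL: "eqL ?a ?e" using eqL_if_eqJ_mult uv(1) e(1) by blast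
  have "eqJ y ?a" unfolding eqJ_def using \<open>leJ y ?a\<close> \<open>eqJ ?a ?e\<close> e y leJ_trans unfolding eqJ_def by blast
  then have "eqR (f ?a v) ?a" using eqR_if_eqJ_mult[OF a uv(2)] by (simp only: y_av[symmetric])
  then show ?thesis using a aL eqR_sym y_av by metis
qed

lemma lrep: "y \<in> S \<Longrightarrow> lrep y \<in> S \<and> eqR (lrep y) y \<and> eqL (lrep y) (J_idem y)"
  unfolding lrep_def using someI_ex[OF lrep_exists] eqR_sym eqL_refl J_idem_in by auto

lemma lrep_cong:
  assumes y: "y \<in> S" "y' \<in> S" "eqR y y'" shows "lrep y = lrep y'"
proof -
  have e: "J_idem y = J_idem y'" using J_idem_cong eqR_eqJ y by blast
  have "eqR y (J_idem y) \<longleftrightarrow> eqR y' (J_idem y')"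
    using e y eqR_trans eqR_sym J_idem_in by metis
  moreover have "(\<lambda>a. a \<in> S \<and> eqR a y \<and> eqL a (J_idem y)) = (\<lambda>a. a \<in> S \<and> eqR a y' \<and> eqL a (J_idem y'))"
    using e y eqR_trans eqR_sym by metis
  ultimately show ?thesis unfolding lrep_def e by simp
qed

lemma lrep_lrep: "y \<in> S \<Longrightarrow> lrep (lrep y) = lrep y"
  using lrep lrep_cong by blast

lemma lrep_E: "e \<in> E \<Longrightarrow> lrep e = e"
  unfolding lrep_def using J_idem_E E_in eqR_refl by simp

lemma finite_lrep: "finite (lrep ` S)"
  by (rule finite_image_factor[OF finite_R_ideals]) (use lrep_cong R_ideal_eq_iff in blast)

lemma rrep: "y \<in> S \<Longrightarrow> rrep y \<in> S \<and> eqR (rrep y) (J_idem y) \<and> eqL (rrep y) y"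
  using regular_fin_ideals.lrep[OF dual] unfolding rrep_def dual_eqR dual_eqL by (simp add: dual_J_idem)

lemma rrep_cong: "y \<in> S \<Longrightarrow> y' \<in> S \<Longrightarrow> eqL y y' \<Longrightarrow> rrep y = rrep y'"
  using regular_fin_ideals.lrep_cong[OF dual] unfolding rrep_def dual_eqR .

lemma rrep_rrep: "y \<in> S \<Longrightarrow> rrep (rrep y) = rrep y"
  using rrep rrep_cong by blast

lemma rrep_E: "e \<in> E \<Longrightarrow> rrep e = e"
  using regular_fin_ideals.lrep_E[OF dual] unfolding rrep_def dual_E .

lemma finite_rrep: "finite (rrep ` S)"
  using regular_fin_ideals.finite_lrep[OF dual] unfolding rrep_def .

definition linv where "linv e a = (SOME t. t \<in> S \<and> f t a = e)"
definition rinv where "rinv e b = (SOME t. t \<in> S \<and> f b t = e)"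

lemma linv: "eqL a e \<Longrightarrow> linv e a \<in> S \<and> f (linv e a) a = e"
  unfolding linv_def eqL_def leL_def by (rule someI_ex) metis

lemma rinv: "eqR b e \<Longrightarrow> rinv e b \<in> S \<and> f b (rinv e b) = e"
  unfolding rinv_def eqR_def leR_def by (rule someI_ex) metis

lemma linv_cancel:
  assumes e: "idem e" and a: "a \<in> S" "eqL a e" and y: "leR y a"
  shows "f a (f (linv e a) y) = y"
proof -
  obtain s where s: "s \<in> S" "y = f a s" using y unfolding leR_def by blast
  have a': "linv e a \<in> S" "f (linv e a) a = e" using linv a(2) by auto
  have ae: "f a e = a" using idem_right_unit e a(2) unfolding eqL_def by blast
  have "f a (f (linv e a) y) = f (f a (f (linv e a) a)) s" using a(1) a'(1) s by simp
  also have "\<dots> = y" by (simp only: a'(2) ae s(2)[symmetric])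
  finally show ?thesis .
qed

lemma rinv_cancel:
  assumes e: "idem e" and b: "b \<in> S" "eqR b e" and y: "leL y b"
  shows "f (f y (rinv e b)) b = y"
proof -
  obtain t where t: "t \<in> S" "y = f t b" using y unfolding leL_def by blast
  have b': "rinv e b \<in> S" "f b (rinv e b) = e" using rinv b(2) by auto
  have eb: "f e b = b" using idem_left_unit e b(2) unfolding eqR_def by blast
  have "f (f y (rinv e b)) b = f t (f (f b (rinv e b)) b)" using b(1) b'(1) t by simp
  also have "\<dots> = y" by (simp only: b'(2) eb t(2)[symmetric])
  finally show ?thesis .
qed

lemma green_decomp:
  assumes e: "idem e" and a: "a \<in> S" "eqL a e" and b: "b \<in> S" "eqR b e"
    and y: "y \<in> S" "eqR y a" "eqL y b"
  defines "g \<equiv> f (f (linv e a) y) (rinv e b)"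
  shows "g \<in> H e" "y = f (f a g) b"
proof -
  let ?a' = "linv e a" and ?b' = "rinv e b"
  have a': "?a' \<in> S" "f ?a' a = e" using linv a by auto
  have b': "?b' \<in> S" "f b ?b' = e" using rinv b by auto
  have aay: "f a (f ?a' y) = y" using linv_cancel e a y(2) unfolding eqR_def by blast
  have ybb: "f (f y ?b') b = y" using rinv_cancel e b y(3) unfolding eqL_def by blast
  have gS: "g \<in> S" unfolding g_def using a'(1) b'(1) y(1) by simp
  have "f (f a g) b = f (f (f a (f ?a' y)) ?b') b" unfolding g_def using a(1) a'(1) b'(1) y(1) by simp
  also have "\<dots> = y" by (simp only: aay ybb)
  finally show "y = f (f a g) b" by simp
  obtain s where s: "s \<in> S" "y = f a s" using y unfolding eqR_def leR_def by blast
  obtain t where t: "t \<in> S" "y = f t b" using y unfolding eqL_def leL_def by blast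
  obtain r1 where r1: "r1 \<in> S" "a = f y r1" using y unfolding eqR_def leR_def by blast
  obtain r2 where r2: "r2 \<in> S" "b = f r2 y" using y unfolding eqL_def leL_def by blast
  have "g = f (f ?a' a) (f s ?b')" unfolding g_def using a(1) a'(1) b'(1) s by simp
  then have "leR g e" using leRI[of "f s ?b'"] s(1) b'(1) by (simp add: a'(2))
  have "g = f (f ?a' t) (f b ?b')" unfolding g_def using b(1) a'(1) b'(1) t by simp
  then have "leL g e" using leLI[of "f ?a' t"] t(1) a'(1) by (simp add: b'(2))
  have "f g (f b r1) = f ?a' (f (f (f y ?b') b) r1)" unfolding g_def using a'(1) b'(1) y(1) b(1) r1(1) by simp
  also have "\<dots> = e" by (simp only: ybb r1(2)[symmetric] a'(2))
  finally have "leR e g" using leRI[of "f b r1" e g] b(1) r1(1) by simp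
  have "f (f r2 a) g = f (f r2 (f a (f ?a' y))) ?b'" unfolding g_def using a(1) a'(1) b'(1) y(1) r2(1) by simp
  also have "\<dots> = e" by (simp only: aay r2(2)[symmetric] b'(2))
  finally have "leL e g" using leLI[of "f r2 a" e g] a(1) r2(1) by simp
  show "g \<in> H e" unfolding H_def eqR_def eqL_def
    using gS \<open>leR g e\<close> \<open>leL g e\<close> \<open>leR e g\<close> \<open>leL e g\<close> by blast
qed

lemma green_unique:
  assumes e: "idem e" and a: "eqL a e" and b: "eqR b e" and g: "g \<in> H e"
    and "a \<in> S" "b \<in> S"
  shows "f (f (linv e a) (f (f a g) b)) (rinv e b) = g"
proof -
  have a': "linv e a \<in> S" "f (linv e a) a = e" using linv a by auto
  have b': "rinv e b \<in> S" "f b (rinv e b) = e" using rinv b by auto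
  have "f (f (linv e a) (f (f a g) b)) (rinv e b) = f (f (f (linv e a) a) g) (f b (rinv e b))"
    using assms(5,6) a'(1) b'(1) H_in[OF g] by simp
  also have "\<dots> = g" using H_unit[OF e g] by (simp only: a'(2) b'(2))
  finally show ?thesis .
qed

lemma green_compose:
  assumes e: "idem e" and a: "a \<in> S" "eqL a e" and b: "b \<in> S" "eqR b e" and g: "g \<in> H e"
  shows "f (f a g) b \<in> S" "eqR (f (f a g) b) a" "eqL (f (f a g) b) b"
proof -
  let ?y = "f (f a g) b"
  have a': "linv e a \<in> S" "f (linv e a) a = e" using linv a by auto
  have b': "rinv e b \<in> S" "f b (rinv e b) = e" using rinv b by auto
  have gS: "g \<in> S" using H_in g .
  have u: "f e g = g" "f g e = g" using H_unit e g by auto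
  obtain h where h: "h \<in> H e" "f g h = e" "f h g = e" using H_inverse e g by blast
  have hS: "h \<in> S" using H_in h(1) .
  have ae: "f a e = a" using idem_right_unit e a unfolding eqL_def by blast
  have eb: "f e b = b" using idem_left_unit e b unfolding eqR_def by blast
  show yS: "?y \<in> S" using a b gS by simp
  have "f ?y (f (rinv e b) h) = f a (f (f g (f b (rinv e b))) h)" using a(1) b(1) gS b'(1) hS by simp
  also have "\<dots> = a" by (simp only: b'(2) u h(2) ae)
  finally have "leR a ?y" using leRI[of "f (rinv e b) h" a ?y] b'(1) hS by simp
  moreover have "leR ?y a" using leRI[of "f g b" ?y a] a(1) b(1) gS by simp
  ultimately show "eqR ?y a" unfolding eqR_def by blast
  have "f (f h (linv e a)) ?y = f (f h (f (f (linv e a) a) g)) b" using a(1) b(1) gS a'(1) hS by simp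
  also have "\<dots> = b" by (simp only: a'(2) u h(3) eb)
  finally have "leL b ?y" using leLI[of "f h (linv e a)" b ?y] a'(1) hS by simp
  moreover have "leL ?y b" using leLI[of "f a g" ?y b] a(1) gS by simp
  ultimately show "eqL ?y b" unfolding eqL_def by blast
qed

definition group_part where
  "group_part y = f (f (linv (J_idem y) (lrep y)) y) (rinv (J_idem y) (rrep y))"

lemma group_part:
  assumes y: "y \<in> S"
  shows "group_part y \<in> H (J_idem y)" "y = f (f (lrep y) (group_part y)) (rrep y)"
proof -
  have e: "idem (J_idem y)" using J_idem y by blast
  have a: "lrep y \<in> S" "eqL (lrep y) (J_idem y)" "eqR y (lrep y)" using lrep[OF y] eqR_sym by auto
  have b: "rrep y \<in> S" "eqR (rrep y) (J_idem y)" "eqL y (rrep y)" using rrep[OF y] eqL_sym by auto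
  show "group_part y \<in> H (J_idem y)" "y = f (f (lrep y) (group_part y)) (rrep y)"
    unfolding group_part_def using green_decomp[OF e a(1,2) b(1,2) y a(3) b(3)] by simp_all
qed

definition J_height where "J_height y = card (J_ideal ` J_ideal y)"

lemma J_height_less:
  assumes x: "x \<in> S" and y: "y \<in> S" and xy: "leJ x y" "\<not> leJ y x"
  shows "J_height x < J_height y"
proof -
  have mem: "z \<in> J_ideal w \<longleftrightarrow> z \<in> S \<and> leJ z w" for z w unfolding J_ideal_def by simp
  have "J_ideal x \<subseteq> J_ideal y" using leJ_trans[OF _ xy(1) y] by (auto simp: mem)
  then have sub: "J_ideal ` J_ideal x \<subseteq> J_ideal ` J_ideal y" by (rule image_mono)
  have "J_ideal y \<notin> J_ideal ` J_ideal x"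
  proof
    assume "J_ideal y \<in> J_ideal ` J_ideal x"
    then obtain z where z: "z \<in> J_ideal x" "J_ideal y = J_ideal z" by (rule imageE) simp
    then have "z \<in> S" "leJ z x" by (simp_all add: mem)
    moreover from this(1) have "eqJ y z" using J_ideal_eq_iff[OF y] z(2) by blast
    ultimately show False using leJ_trans x xy(2) unfolding eqJ_def by blast
  qed
  moreover have "J_ideal y \<in> J_ideal ` J_ideal y" using leJ_refl y by (simp add: mem)
  ultimately have "J_ideal ` J_ideal x \<subset> J_ideal ` J_ideal y" using sub by blast
  moreover have "finite (J_ideal ` J_ideal y)"
    by (rule finite_subset[OF image_mono finite_J_ideals]) (simp add: mem subset_iff)
  ultimately show ?thesis unfolding J_height_def by (rule psubset_card_mono[rotated])
qed

lemma J_height_eqJ: "x \<in> S \<Longrightarrow> y \<in> S \<Longrightarrow> eqJ x y \<Longrightarrow> J_height x = J_height y"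
  unfolding J_height_def using J_ideal_eq_iff[of x y] by simp

lemma J_height_J_idem: "y \<in> S \<Longrightarrow> J_height (J_idem y) = J_height y"
  using J_height_eqJ J_idem J_idem_in by blast

lemma mult_J_cases:
  assumes x: "x \<in> S" and y: "y \<in> S"
  shows "eqJ (f x y) x \<and> eqJ (f x y) y \<and> J_idem x = J_idem y
    \<or> J_height (f x y) < max (J_height x) (J_height y)"
proof (cases "leJ x (f x y) \<and> leJ y (f x y)")
  case True
  then have J: "eqJ (f x y) x" "eqJ (f x y) y"
    unfolding eqJ_def using leJ_mult_left[OF x y] leJ_mult_right[OF x y] by auto
  then have "J_idem x = J_idem y" using J_idem_cong eqJ_trans eqJ_sym x y by metis
  with J show ?thesis by blast
next
  case False
  then show ?thesis
    using J_height_less[OF _ x leJ_mult_left[OF x y]] J_height_less[OF _ y leJ_mult_right[OF x y]] x y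
    by (auto simp: less_max_iff_disj)
qed

definition J_rank where "J_rank e = (J_height e, to_nat_on E e)"

lemma J_rank_less: "J_height e < J_height e' \<Longrightarrow> J_rank e < J_rank e'"
  unfolding J_rank_def by (simp add: less_prod_def)

lemma J_rank_inj: "e \<in> E \<Longrightarrow> e' \<in> E \<Longrightarrow> J_rank e = J_rank e' \<Longrightarrow> e = e'"
  unfolding J_rank_def using finite_E by (simp add: countable_finite)

end

locale regular_fcrs_subgroups = regular_fin_ideals +
  assumes subgroups_fcrs: "\<forall>H. maximal_subgroup S f H \<longrightarrow> has_finite_complete_presentation H f"
begin

definition presentation_H :: "'a \<Rightarrow> nat set \<times> (nat list \<times> nat list) set \<times> (nat list \<Rightarrow> 'a)" where
  "presentation_H e = (SOME (Y, R, \<psi>). finite_complete_rws Y R \<and> pres_map Y R (H e) f \<psi>)"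

definition HX where "HX e = fst (presentation_H e)"
definition HR where "HR e = fst (snd (presentation_H e))"
definition Hval where "Hval e = snd (snd (presentation_H e))"

lemma presentation_H:
  assumes e: "e \<in> E"
  shows "finite_complete_rws (HX e) (HR e)" "pres_map (HX e) (HR e) (H e) f (Hval e)"
proof -
  have "has_finite_complete_presentation (H e) f"
    using subgroups_fcrs H_maximal E_idem e by blast
  then have "\<exists>p. case p of (Y, R, \<psi>) \<Rightarrow> finite_complete_rws Y R \<and> pres_map Y R (H e) f \<psi>"
    unfolding has_finite_complete_presentation_def presents_iff_pres_map by auto
  then have "case presentation_H e of (Y, R, \<psi>) \<Rightarrow> finite_complete_rws Y R \<and> pres_map Y R (H e) f \<psi>"
    unfolding presentation_H_def by (rule someI_ex)
  then show "finite_complete_rws (HX e) (HR e)" "pres_map (HX e) (HR e) (H e) f (Hval e)"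
    unfolding HX_def HR_def Hval_def by (simp_all split: prod.splits)
qed

lemma HR_rules_over: "e \<in> E \<Longrightarrow> rules_over (HX e) (HR e)"
  using presentation_H(1) by (rule finite_complete_rws_rules_over)

lemma finite_HX: "e \<in> E \<Longrightarrow> finite (HX e)"
  using presentation_H(1) unfolding finite_complete_rws_def by blast

lemma finite_HR: "e \<in> E \<Longrightarrow> finite (HR e)"
  using presentation_H(1) unfolding finite_complete_rws_def by blast

lemma HR_noetherian: "e \<in> E \<Longrightarrow> rw_noetherian (HX e) (HR e)"
  using presentation_H(1) unfolding finite_complete_rws_def by blast

lemma Hval_in: "e \<in> E \<Longrightarrow> w \<in> lists (HX e) \<Longrightarrow> w \<noteq> [] \<Longrightarrow> Hval e w \<in> H e"
  using presentation_H(2) unfolding pres_map_def by blast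

lemma Hval_append: "e \<in> E \<Longrightarrow> u \<in> lists (HX e) \<Longrightarrow> u \<noteq> [] \<Longrightarrow> v \<in> lists (HX e) \<Longrightarrow> v \<noteq> []
   \<Longrightarrow> Hval e (u @ v) = f (Hval e u) (Hval e v)"
  using presentation_H(2) unfolding pres_map_def by blast

text \<open>The generators of \<open>S\<close> are quadruples \<open>(e, x, a, b)\<close>, standing for \<open>a x b\<close>, where \<open>x\<close> is a
  generator of \<open>H e\<close> and \<open>a\<close>, \<open>b\<close> are chosen representatives in the L- and R-class of \<open>e\<close>.\<close>

definition admissible where
  "admissible e a b \<longleftrightarrow> e \<in> E \<and> a \<in> lrep ` S \<and> eqL a e \<and> b \<in> rrep ` S \<and> eqR b e"

definition Letters :: "('a \<times> nat \<times> 'a \<times> 'a) set" where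
  "Letters = {(e, x, a, b). admissible e a b \<and> x \<in> HX e}"

lemma finite_Letters: "finite Letters"
proof (rule finite_subset)
  show "Letters \<subseteq> Sigma E (\<lambda>e. HX e \<times> (lrep ` S \<times> rrep ` S))"
    unfolding Letters_def admissible_def by auto
  show "finite (Sigma E (\<lambda>e. HX e \<times> (lrep ` S \<times> rrep ` S)))"
    using finite_E finite_HX finite_lrep finite_rrep by (intro finite_SigmaI finite_cartesian_product) auto
qed

definition code :: "'a \<times> nat \<times> 'a \<times> 'a \<Rightarrow> nat" where "code = to_nat_on Letters"
definition letter :: "nat \<Rightarrow> 'a \<times> nat \<times> 'a \<times> 'a" where "letter = from_nat_into Letters"
definition X where "X = code ` Letters"

lemma finite_X: "finite X"
  unfolding X_def using finite_Letters by simp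

lemma letter_code: "d \<in> Letters \<Longrightarrow> letter (code d) = d"
  unfolding letter_def code_def using finite_Letters by (simp add: countable_finite)

lemma code_letter: "n \<in> X \<Longrightarrow> code (letter n) = n"
  unfolding X_def letter_def code_def by simp

lemma code_in_X: "d \<in> Letters \<Longrightarrow> code d \<in> X"
  unfolding X_def by simp

lemma letter_in: "n \<in> X \<Longrightarrow> letter n \<in> Letters"
  unfolding X_def using letter_code by auto

definition lidem where "lidem n = fst (letter n)"
definition lgen where "lgen n = fst (snd (letter n))"
definition lleft where "lleft n = fst (snd (snd (letter n)))"
definition lright where "lright n = snd (snd (snd (letter n)))"

lemma letter_eq: "letter n = (lidem n, lgen n, lleft n, lright n)"
  unfolding lidem_def lgen_def lleft_def lright_def by simp

lemma letter_props: "n \<in> X \<Longrightarrow> admissible (lidem n) (lleft n) (lright n) \<and> lgen n \<in> HX (lidem n)"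
  using letter_in[of n] unfolding letter_eq Letters_def by simp

lemma code_components: "n \<in> X \<Longrightarrow> code (lidem n, lgen n, lleft n, lright n) = n"
  using code_letter unfolding letter_eq .

lemma components_code:
  assumes "admissible e a b" "x \<in> HX e"
  shows "lidem (code (e, x, a, b)) = e" "lgen (code (e, x, a, b)) = x"
    "lleft (code (e, x, a, b)) = a" "lright (code (e, x, a, b)) = b"
  using letter_code[of "(e, x, a, b)"] assms unfolding Letters_def lidem_def lgen_def lleft_def lright_def
  by simp_all

lemma admissible_in:
  assumes "admissible e a b" shows "e \<in> S" "a \<in> S" "b \<in> S" "idem e"
  using assms lrep rrep E_in E_idem unfolding admissible_def by auto

lemma admissible_idem:
  assumes e: "e \<in> E" shows "admissible e e e"
proof -
  have "e \<in> lrep ` S" "e \<in> rrep ` S"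
    using image_eqI[of e lrep e S] image_eqI[of e rrep e S] lrep_E[OF e] rrep_E[OF e] E_in[OF e] by simp_all
  then show ?thesis unfolding admissible_def using e E_in eqL_refl eqR_refl by blast
qed

lemma admissible_left: "admissible e a b \<Longrightarrow> admissible e a e"
  using admissible_idem unfolding admissible_def by blast

lemma admissible_right: "admissible e a b \<Longrightarrow> admissible e e b"
  using admissible_idem unfolding admissible_def by blast

definition letter_val where "letter_val n = f (f (lleft n) (Hval (lidem n) [lgen n])) (lright n)"

fun val :: "nat list \<Rightarrow> 'a" where
  "val [] = undefined"
| "val [n] = letter_val n"
| "val (n # m # w) = f (letter_val n) (val (m # w))"

lemma letter_val_in: "n \<in> X \<Longrightarrow> letter_val n \<in> S"
proof -
  assume n: "n \<in> X"
  have ok: "admissible (lidem n) (lleft n) (lright n)" and x: "lgen n \<in> HX (lidem n)"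
    using letter_props[OF n] by auto
  have "Hval (lidem n) [lgen n] \<in> S" using Hval_in[of "lidem n" "[lgen n]"] H_in ok x
    unfolding admissible_def by simp
  then show ?thesis unfolding letter_val_def using admissible_in[OF ok] by simp
qed

lemma val_in: "w \<in> lists X \<Longrightarrow> w \<noteq> [] \<Longrightarrow> val w \<in> S"
  by (induction w rule: val.induct) (auto simp: letter_val_in)

lemma val_append:
  "u \<in> lists X \<Longrightarrow> u \<noteq> [] \<Longrightarrow> v \<in> lists X \<Longrightarrow> v \<noteq> [] \<Longrightarrow> val (u @ v) = f (val u) (val v)"
proof (induction u rule: val.induct)
  case (2 n) then show ?case by (cases v) auto
next
  case (3 n m w)
  then show ?case using letter_val_in val_in by simp
qed simp

fun lift :: "'a \<Rightarrow> nat list \<Rightarrow> 'a \<Rightarrow> 'a \<Rightarrow> nat list" where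
  "lift e [] a b = []"
| "lift e [x] a b = [code (e, x, a, b)]"
| "lift e (x # y # w) a b = code (e, x, a, e) # lift e (y # w) e b"

lemma length_lift: "length (lift e u a b) = length u"
  by (induction e u a b rule: lift.induct) auto

lemma lift_eq_Nil_iff: "lift e u a b = [] \<longleftrightarrow> u = []"
  using length_lift by (metis length_0_conv)

lemma lift_append: "u \<noteq> [] \<Longrightarrow> v \<noteq> [] \<Longrightarrow> lift e (u @ v) a b = lift e u a e @ lift e v e b"
proof (induction e u a b rule: lift.induct)
  case (2 e x a b) then show ?case by (cases v) auto
qed simp_all

lemma lift_props:
  "admissible e a b \<Longrightarrow> u \<in> lists (HX e) \<Longrightarrow>
    lift e u a b \<in> lists X \<and> (\<forall>n\<in>set (lift e u a b). lidem n = e) \<and> map lgen (lift e u a b) = u"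
proof (induction e u a b rule: lift.induct)
  case (3 e x y w a b)
  have ok: "admissible e a e" "admissible e e b" using admissible_left admissible_right "3.prems"(1) by auto
  have xw: "x \<in> HX e" "y # w \<in> lists (HX e)" using "3.prems"(2) by auto
  have "code (e, x, a, e) \<in> X" "lidem (code (e, x, a, e)) = e" "lgen (code (e, x, a, e)) = x"
    using code_in_X[of "(e, x, a, e)"] components_code[OF ok(1) xw(1)] ok(1) xw(1)
    unfolding Letters_def by auto
  with "3.IH"[OF ok(2) xw(2)] show ?case by auto
qed (auto simp: code_in_X components_code Letters_def)

lemma val_lift:
  assumes "admissible e a b" "u \<in> lists (HX e)" "u \<noteq> []"
  shows "val (lift e u a b) = f (f a (Hval e u)) b"
  using assms
proof (induction e u a b rule: lift.induct)
  case (2 e x a b)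
  then show ?case using components_code by (simp add: letter_val_def)
next
  case (3 e x y w a b)
  have ok: "admissible e a e" "admissible e e b" using admissible_left admissible_right 3 by auto
  have e: "e \<in> E" using 3 unfolding admissible_def by blast
  have S: "e \<in> S" "a \<in> S" "b \<in> S" "idem e" using admissible_in 3 by auto
  have g: "Hval e [x] \<in> H e" "Hval e (y # w) \<in> H e" using Hval_in e 3 by auto
  have gS: "Hval e [x] \<in> S" "Hval e (y # w) \<in> S" using g H_in by auto
  have u: "f (Hval e [x]) e = Hval e [x]" "f e (Hval e (y # w)) = Hval e (y # w)" using H_unit S(4) g by auto
  have "letter_val (code (e, x, a, e)) = f (f a (Hval e [x])) e"
    using components_code ok 3 unfolding letter_val_def by simp
  then have "val (lift e (x # y # w) a b) = f (f (f a (Hval e [x])) e) (f (f e (Hval e (y # w))) b)"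
    using 3 ok by (cases w) auto
  also have "\<dots> = f (f a (f (f (Hval e [x]) e) (f e (Hval e (y # w))))) b" using S gS by simp
  also have "\<dots> = f (f a (Hval e (x # y # w))) b"
    using Hval_append[of e "[x]" "y # w"] e 3 by (simp only: u) simp
  finally show ?case .
qed simp

definition weight :: "nat list \<Rightarrow> nat" where
  "weight w = length (filter (\<lambda>n. lleft n \<noteq> lidem n) w) + length (filter (\<lambda>n. lright n \<noteq> lidem n) w)"

lemma weight_append: "weight (u @ v) = weight u + weight v"
  unfolding weight_def by simp

lemma weight_lift:
  "admissible e a b \<Longrightarrow> u \<in> lists (HX e) \<Longrightarrow> u \<noteq> [] \<Longrightarrow>
    weight (lift e u a b) = (if a = e then 0 else 1) + (if b = e then 0 else 1)"
proof (induction e u a b rule: lift.induct)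
  case (2 e x a b) then show ?case using components_code unfolding weight_def by auto
next
  case (3 e x y w a b)
  have ok: "admissible e a e" "admissible e e b" using admissible_left admissible_right "3.prems"(1) by auto
  have "lleft (code (e, x, a, e)) = a" "lright (code (e, x, a, e)) = e" "lidem (code (e, x, a, e)) = e"
    using components_code[OF ok(1)] "3.prems"(2) by auto
  then have "weight [code (e, x, a, e)] = (if a = e then 0 else 1)" unfolding weight_def by simp
  moreover have "weight (lift e (y # w) e b) = (if b = e then 0 else 1)" using "3.IH"[OF ok(2)] "3.prems"(2) by simp
  ultimately show ?case using weight_append[of "[code (e, x, a, e)]"] by simp
qed simp

definition group_nf where
  "group_nf e g = (SOME w. w \<in> lists (HX e) \<and> w \<noteq> [] \<and> irred (HX e) (HR e) w \<and> Hval e w = g)"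

lemma group_nf:
  assumes "e \<in> E" "g \<in> H e"
  shows "group_nf e g \<in> lists (HX e)" "group_nf e g \<noteq> []" "irred (HX e) (HR e) (group_nf e g)"
    "Hval e (group_nf e g) = g"
proof -
  obtain w where "w \<in> lists (HX e)" "w \<noteq> []" "irred (HX e) (HR e) w" "Hval e w = g"
    using pres_map_irred_exists[OF presentation_H[OF assms(1)] assms(2)] .
  then have "\<exists>w. w \<in> lists (HX e) \<and> w \<noteq> [] \<and> irred (HX e) (HR e) w \<and> Hval e w = g" by blast
  from someI_ex[OF this] show "group_nf e g \<in> lists (HX e)" "group_nf e g \<noteq> []"
    "irred (HX e) (HR e) (group_nf e g)" "Hval e (group_nf e g) = g"
    unfolding group_nf_def by simp_all
qed

lemma group_nf_Hval:
  assumes e: "e \<in> E" and u: "u \<in> lists (HX e)" "u \<noteq> []" "irred (HX e) (HR e) u"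
  shows "group_nf e (Hval e u) = u"
proof -
  have g: "Hval e u \<in> H e" using Hval_in e u by blast
  show ?thesis using group_nf[OF e g] u
    by (intro pres_map_irred_unique[OF presentation_H[OF e]]) auto
qed

definition nf where "nf y = lift (J_idem y) (group_nf (J_idem y) (group_part y)) (lrep y) (rrep y)"

lemma admissible_J_idem: "y \<in> S \<Longrightarrow> admissible (J_idem y) (lrep y) (rrep y)"
  unfolding admissible_def using J_idem_in_E lrep rrep by blast

lemma nf:
  assumes y: "y \<in> S"
  shows "nf y \<in> lists X" "nf y \<noteq> []" "val (nf y) = y" "\<forall>n\<in>set (nf y). lidem n = J_idem y"
proof -
  have ok: "admissible (J_idem y) (lrep y) (rrep y)" using admissible_J_idem y .
  have g: "group_part y \<in> H (J_idem y)" using group_part y by blast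
  note w = group_nf[OF J_idem_in_E[OF y] g]
  show "nf y \<in> lists X" "\<forall>n\<in>set (nf y). lidem n = J_idem y"
    unfolding nf_def using lift_props[OF ok w(1)] by simp_all
  show "nf y \<noteq> []" unfolding nf_def using lift_eq_Nil_iff w(2) by simp
  show "val (nf y) = y" unfolding nf_def using val_lift[OF ok w(1,2)] w(4) group_part(2)[OF y] by simp
qed

lemma admissible_product:
  assumes ok: "admissible e a b" and g: "g \<in> H e"
  shows "f (f a g) b \<in> S" "J_idem (f (f a g) b) = e" "lrep (f (f a g) b) = a" "rrep (f (f a g) b) = b"
    "group_part (f (f a g) b) = g"
proof -
  let ?y = "f (f a g) b"
  have e: "e \<in> E" using ok admissible_def by blast
  have S: "e \<in> S" "a \<in> S" "b \<in> S" "idem e" using admissible_in ok by auto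
  have aL: "eqL a e" and bR: "eqR b e" using ok admissible_def by auto
  show y: "?y \<in> S" using green_compose[OF S(4) S(2) aL S(3) bR g] by blast
  have yR: "eqR ?y a" and yL: "eqL ?y b" using green_compose[OF S(4) S(2) aL S(3) bR g] by auto
  have "eqJ ?y e" using eqJ_trans[OF eqR_eqJ[OF yR S(2)] eqL_eqJ[OF aL S(1)] S(1)] .
  then show ide: "J_idem ?y = e" using J_idem_cong[OF y S(1)] J_idem_E e by simp
  obtain a0 where "a0 \<in> S" "a = lrep a0" using ok admissible_def by blast
  then have "lrep a = a" using lrep_lrep by simp
  then show ly: "lrep ?y = a" using lrep_cong[OF y S(2) yR] by simp
  obtain b0 where "b0 \<in> S" "b = rrep b0" using ok admissible_def by blast
  then have "rrep b = b" using rrep_rrep by simp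
  then show ry: "rrep ?y = b" using rrep_cong[OF y S(3) yL] by simp
  show "group_part ?y = g" unfolding group_part_def ide ly ry
    using green_unique[OF S(4) aL bR g S(2,3)] .
qed

lemma nf_lift:
  assumes ok: "admissible e a b" and u: "u \<in> lists (HX e)" "u \<noteq> []" "irred (HX e) (HR e) u"
  shows "nf (f (f a (Hval e u)) b) = lift e u a b"
proof -
  have e: "e \<in> E" using ok admissible_def by blast
  note p = admissible_product[OF ok Hval_in[OF e u(1,2)]]
  show ?thesis unfolding nf_def p(2-5) using group_nf_Hval[OF e u] by simp
qed

lemma letter_val_product:
  assumes n: "n \<in> X"
  shows "J_idem (letter_val n) = lidem n" "lrep (letter_val n) = lleft n" "rrep (letter_val n) = lright n"
proof -
  have ok: "admissible (lidem n) (lleft n) (lright n)" and x: "lgen n \<in> HX (lidem n)"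
    using letter_props n by auto
  have "Hval (lidem n) [lgen n] \<in> H (lidem n)" using Hval_in x ok admissible_def by auto
  from admissible_product[OF ok this]
  show "J_idem (letter_val n) = lidem n" "lrep (letter_val n) = lleft n" "rrep (letter_val n) = lright n"
    unfolding letter_val_def by simp_all
qed

text \<open>Two letters are linked when they may stand next to each other in a normal form.\<close>

definition linked where "linked c d \<longleftrightarrow> lidem c = lidem d \<and> lright c = lidem c \<and> lleft d = lidem d"

definition lifted_rules where
  "lifted_rules = {(lift e u a b, lift e v a b) | e u v a b. admissible e a b \<and> (u, v) \<in> HR e}"

definition pair_rules where
  "pair_rules = {([c, d], nf (f (letter_val c) (letter_val d))) | c d. c \<in> X \<and> d \<in> X \<and> \<not> linked c d}"

definition Rules where "Rules = lifted_rules \<union> pair_rules"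

lemma HR_in_lists: "e \<in> E \<Longrightarrow> (u, v) \<in> HR e \<Longrightarrow> u \<in> lists (HX e) \<and> u \<noteq> [] \<and> v \<in> lists (HX e) \<and> v \<noteq> []"
  using HR_rules_over unfolding rules_over_def by blast

lemma finite_Rules: "finite Rules"
proof -
  have "lifted_rules \<subseteq> (\<lambda>(e, (u, v), a, b). (lift e u a b, lift e v a b)) ` Sigma E (\<lambda>e. HR e \<times> (lrep ` S \<times> rrep ` S))"
  proof
    fix p assume "p \<in> lifted_rules"
    then obtain e u v a b where p: "p = (lift e u a b, lift e v a b)" "admissible e a b" "(u, v) \<in> HR e"
      unfolding lifted_rules_def by blast
    then have "(e, (u, v), a, b) \<in> Sigma E (\<lambda>e. HR e \<times> (lrep ` S \<times> rrep ` S))"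
      unfolding admissible_def by blast
    with p(1) show "p \<in> (\<lambda>(e, (u, v), a, b). (lift e u a b, lift e v a b)) ` Sigma E (\<lambda>e. HR e \<times> (lrep ` S \<times> rrep ` S))"
      by (intro image_eqI[where x = "(e, (u, v), a, b)"]) simp_all
  qed
  moreover have "finite (Sigma E (\<lambda>e. HR e \<times> (lrep ` S \<times> rrep ` S)))"
    using finite_E finite_HR finite_lrep finite_rrep by (intro finite_SigmaI finite_cartesian_product) auto
  moreover have "pair_rules \<subseteq> (\<lambda>(c, d). ([c, d], nf (f (letter_val c) (letter_val d)))) ` (X \<times> X)"
    unfolding pair_rules_def by auto
  ultimately show ?thesis unfolding Rules_def using finite_X by (auto intro: finite_subset)
qed

lemma rules_over_Rules: "rules_over X Rules"
  unfolding rules_over_def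
proof (intro ballI, clarify)
  fix u v assume "(u, v) \<in> Rules"
  then consider "(u, v) \<in> lifted_rules" | "(u, v) \<in> pair_rules" unfolding Rules_def by blast
  then show "u \<in> lists X \<and> u \<noteq> [] \<and> v \<in> lists X \<and> v \<noteq> []"
  proof cases
    case 1
    then obtain e l r a b where x: "u = lift e l a b" "v = lift e r a b" "admissible e a b" "(l, r) \<in> HR e"
      unfolding lifted_rules_def by blast
    have "e \<in> E" using x admissible_def by blast
    then show ?thesis using x HR_in_lists lift_props lift_eq_Nil_iff by metis
  next
    case 2
    then obtain c d where "u = [c, d]" "v = nf (f (letter_val c) (letter_val d))" "c \<in> X" "d \<in> X"
      unfolding pair_rules_def by blast
    then show ?thesis using nf letter_val_in by auto
  qed
qed

lemma Rules_val: "(u, v) \<in> Rules \<Longrightarrow> val u = val v"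
proof -
  assume "(u, v) \<in> Rules"
  then consider "(u, v) \<in> lifted_rules" | "(u, v) \<in> pair_rules" unfolding Rules_def by blast
  then show "val u = val v"
  proof cases
    case 1
    then obtain e l r a b where x: "u = lift e l a b" "v = lift e r a b" "admissible e a b" "(l, r) \<in> HR e"
      unfolding lifted_rules_def by blast
    have e: "e \<in> E" using x admissible_def by blast
    have lr: "l \<in> lists (HX e)" "l \<noteq> []" "r \<in> lists (HX e)" "r \<noteq> []" using HR_in_lists e x by auto
    have "(l, r) \<in> (rw_step (HX e) (HR e))\<^sup>*" using rw_stepI[OF x(4), of "[]" "HX e" "[]"] by simp
    then have "Hval e l = Hval e r"
      using pres_map_rtrancl_eq[OF presentation_H(2)[OF e] HR_rules_over[OF e] _ lr(1,2)] by blast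
    then show ?thesis using x val_lift lr by simp
  next
    case 2
    then obtain c d where "u = [c, d]" "v = nf (f (letter_val c) (letter_val d))" "c \<in> X" "d \<in> X"
      unfolding pair_rules_def by blast
    then show ?thesis using nf letter_val_in by auto
  qed
qed

lemma irred_successively_linked: "w \<in> lists X \<Longrightarrow> irred X Rules w \<Longrightarrow> successively linked w"
proof (induction w rule: induct_list012)
  case (3 c d w)
  have "linked c d"
  proof (rule ccontr)
    assume "\<not> linked c d"
    then have "([c, d], nf (f (letter_val c) (letter_val d))) \<in> Rules"
      unfolding Rules_def pair_rules_def using "3.prems"(1) by auto
    then have "([] @ [c, d] @ w, [] @ nf (f (letter_val c) (letter_val d)) @ w) \<in> rw_step X Rules"
      by (rule rw_stepI) (use "3.prems"(1) in auto)
    then show False using "3.prems"(2) unfolding irred_def by auto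
  qed
  moreover have "irred X Rules (d # w)"
    unfolding irred_def
  proof
    assume "\<exists>w'. (d # w, w') \<in> rw_step X Rules"
    then obtain w' where "(d # w, w') \<in> rw_step X Rules" by blast
    then have "([c] @ (d # w) @ [], [c] @ w' @ []) \<in> rw_step X Rules"
      by (rule rw_step_context) (use "3.prems"(1) in auto)
    then show False using "3.prems"(2) unfolding irred_def by auto
  qed
  ultimately show ?case using "3.IH"(2) "3.prems"(1) by simp
qed simp_all

lemma successively_linked_lift:
  "w \<in> lists X \<Longrightarrow> w \<noteq> [] \<Longrightarrow> successively linked w \<Longrightarrow>
    w = lift (lidem (hd w)) (map lgen w) (lleft (hd w)) (lright (last w)) \<and> (\<forall>n\<in>set w. lidem n = lidem (hd w))"
proof (induction w rule: induct_list012)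
  case (2 c)
  then show ?case using code_components by simp
next
  case (3 c d w)
  have cd: "linked c d" "successively linked (d # w)" using "3.prems"(3) by simp_all
  then have ok: "lidem c = lidem d" "lright c = lidem c" "lleft d = lidem d" unfolding linked_def by simp_all
  have dw: "d # w \<in> lists X" "d # w \<noteq> []" using "3.prems"(1) by simp_all
  have "d # w = lift (lidem d) (map lgen (d # w)) (lleft d) (lright (last (d # w)))
      \<and> (\<forall>n\<in>set (d # w). lidem n = lidem d)"
    using "3.IH"(2)[OF dw cd(2)] unfolding list.sel(1) .
  note IH = conjunct1[OF this] conjunct2[OF this]
  have "lift (lidem c) (map lgen (c # d # w)) (lleft c) (lright (last (c # d # w)))
      = code (lidem c, lgen c, lleft c, lright c) # lift (lidem d) (map lgen (d # w)) (lleft d) (lright (last (d # w)))"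
    using ok by simp
  also have "\<dots> = c # d # w"
    using code_components[of c] "3.prems"(1) by (simp only: IH(1)[symmetric]) simp
  finally have "c # d # w = lift (lidem (hd (c # d # w))) (map lgen (c # d # w)) (lleft (hd (c # d # w)))
      (lright (last (c # d # w)))" unfolding list.sel(1) ..
  moreover have "\<forall>n\<in>set (c # d # w). lidem n = lidem (hd (c # d # w))" using IH(2) ok(1) by simp
  ultimately show ?case ..
qed simp

lemma lift_append3:
  assumes "m \<noteq> []"
  shows "lift e (p @ m @ q) a b
    = lift e p a e @ lift e m (if p = [] then a else e) (if q = [] then b else e) @ lift e q e b"
proof (cases "p = []")
  case True
  then show ?thesis using assms by (cases "q = []") (simp_all add: lift_append)
next
  case False
  then have "lift e (p @ m @ q) a b = lift e p a e @ lift e (m @ q) e b"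
    using assms by (simp add: lift_append)
  then show ?thesis using assms False by (cases "q = []") (simp_all add: lift_append)
qed

lemma lifted_ruleI: "admissible e a b \<Longrightarrow> (u, v) \<in> HR e \<Longrightarrow> (lift e u a b, lift e v a b) \<in> Rules"
  unfolding Rules_def lifted_rules_def by blast

lemma lift_rw_step:
  assumes ok: "admissible e a b" and st: "(u, u') \<in> rw_step (HX e) (HR e)"
  shows "(lift e u a b, lift e u' a b) \<in> rw_step X Rules"
proof -
  obtain p l r q where s: "u = p @ l @ q" "u' = p @ r @ q" "(l, r) \<in> HR e" "p \<in> lists (HX e)" "q \<in> lists (HX e)"
    using st by (rule rw_stepE)
  have e: "e \<in> E" using ok admissible_def by blast
  have lr: "l \<in> lists (HX e)" "l \<noteq> []" "r \<in> lists (HX e)" "r \<noteq> []" using HR_in_lists e s(3) by auto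
  define a' where "a' = (if p = [] then a else e)"
  define b' where "b' = (if q = [] then b else e)"
  have ok': "admissible e a' b'"
    unfolding a'_def b'_def using ok admissible_left[OF ok] admissible_right[OF ok] admissible_idem[OF e] by simp
  note split = lift_append3[of _ e p q a b, folded a'_def b'_def]
  have "(lift e l a' b', lift e r a' b') \<in> Rules" using lifted_ruleI[OF ok' s(3)] .
  moreover have "lift e p a e \<in> lists X" "lift e q e b \<in> lists X"
    using conjunct1[OF lift_props[OF admissible_left[OF ok] s(4)]]
      conjunct1[OF lift_props[OF admissible_right[OF ok] s(5)]] .
  ultimately show ?thesis unfolding s(1,2) split[OF lr(2)] split[OF lr(4)] by (rule rw_stepI)
qed

lemma irred_nf:
  assumes w: "w \<in> lists X" "w \<noteq> []" and ir: "irred X Rules w"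
  shows "nf (val w) = w"
proof -
  let ?e = "lidem (hd w)" and ?u = "map lgen w" and ?a = "lleft (hd w)" and ?b = "lright (last w)"
  have "w = lift ?e ?u ?a ?b \<and> (\<forall>n\<in>set w. lidem n = ?e)"
    using successively_linked_lift[OF w irred_successively_linked[OF w(1) ir]] .
  note wt = conjunct1[OF this] and same = conjunct2[OF this]
  have hd: "hd w \<in> X" "last w \<in> X" using w by auto
  have ok1: "admissible ?e ?a (lright (hd w))" using letter_props[OF hd(1)] by blast
  have "lidem (last w) = ?e" using bspec[OF same last_in_set[OF w(2)]] .
  then have ok2: "admissible ?e (lleft (last w)) ?b" using letter_props[OF hd(2)] by simp
  have ok: "admissible ?e ?a ?b" using ok1 ok2 unfolding admissible_def by blast
  have e: "?e \<in> E" using ok admissible_def by blast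
  have "lgen n \<in> HX ?e" if "n \<in> set w" for n
    using letter_props[of n] bspec[OF same that] that w(1) by auto
  then have u: "?u \<in> lists (HX ?e)" "?u \<noteq> []" using w(2) by auto
  have "irred (HX ?e) (HR ?e) ?u"
    unfolding irred_def
  proof
    assume "\<exists>u'. (?u, u') \<in> rw_step (HX ?e) (HR ?e)"
    then obtain u' where "(?u, u') \<in> rw_step (HX ?e) (HR ?e)" by blast
    from lift_rw_step[OF ok this] have "(w, lift ?e u' ?a ?b) \<in> rw_step X Rules" by (simp only: wt[symmetric])
    with ir show False unfolding irred_def by blast
  qed
  then have "nf (f (f ?a (Hval ?e ?u)) ?b) = w" using nf_lift[OF ok u] by (simp only: wt[symmetric])
  moreover have "val w = f (f ?a (Hval ?e ?u)) ?b" using val_lift[OF ok u] by (simp only: wt[symmetric])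
  ultimately show ?thesis by simp
qed

definition in_class where "in_class e n \<longleftrightarrow> n \<in> X \<and> lidem n = e"

definition block_order where
  "block_order e = inv_image (less_than <*lex*> rw_factor_order (HX e) (HR e)) (\<lambda>w. (weight w, map lgen w))"

lemma wf_block_order: "e \<in> E \<Longrightarrow> wf (block_order e)"
  unfolding block_order_def
  using wf_rw_factor_order[OF HR_noetherian HR_rules_over] by (intro wf_inv_image wf_lex_prod wf_less_than)

lemma in_class_lgen:
  assumes "\<forall>n\<in>set w. in_class e n" shows "map lgen w \<in> lists (HX e)"
proof -
  have "lgen n \<in> HX e" if "n \<in> set w" for n
    using letter_props[of n] bspec[OF assms that] unfolding in_class_def by auto
  then show ?thesis by auto
qed

lemma block_order_factor:
  assumes "\<forall>n\<in>set (a @ y @ b). in_class e n" "a @ b \<noteq> []"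
  shows "(y, a @ y @ b) \<in> block_order e"
proof (cases "weight y < weight (a @ y @ b)")
  case False
  then have "weight y = weight (a @ y @ b)" by (simp add: weight_append)
  moreover have "(map lgen y, map lgen (a @ y @ b)) \<in> proper_factor (HX e)"
    unfolding proper_factor_def using in_class_lgen[OF assms(1)] assms(2) by force
  ultimately show ?thesis unfolding block_order_def rw_factor_order_def by simp
qed (simp add: block_order_def)

lemma lifted_rule_decreases:
  assumes ok: "admissible e a b" and lr: "(l, r) \<in> HR e"
    and "\<forall>n\<in>set p. in_class e n" "\<forall>n\<in>set q. in_class e n"
  shows "(p @ lift e r a b @ q, p @ lift e l a b @ q) \<in> block_order e"
proof -
  have e: "e \<in> E" using ok admissible_def by blast
  have lr': "l \<in> lists (HX e)" "l \<noteq> []" "r \<in> lists (HX e)" "r \<noteq> []" using HR_in_lists[OF e lr] by auto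
  have "(map lgen p @ l @ map lgen q, map lgen p @ r @ map lgen q) \<in> rw_step (HX e) (HR e)"
    using rw_stepI[OF lr] in_class_lgen assms(3,4) by blast
  moreover have "weight (lift e r a b) = weight (lift e l a b)"
    using weight_lift[OF ok] lr' by simp
  ultimately show ?thesis
    unfolding block_order_def rw_factor_order_def using lift_props[OF ok] lr' by (simp add: weight_append)
qed

lemma pair_rule_cases:
  assumes cd: "c \<in> X" "d \<in> X" "\<not> linked c d" and v: "v = nf (f (letter_val c) (letter_val d))"
  shows "lidem c = lidem d \<and> (\<forall>n\<in>set v. in_class (lidem c) n) \<and> weight v < weight [c, d]
    \<or> (\<forall>n\<in>set v. J_rank (lidem n) < max (J_rank (lidem c)) (J_rank (lidem d)))"
proof -
  let ?x = "letter_val c" and ?y = "letter_val d"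
  have S: "?x \<in> S" "?y \<in> S" "f ?x ?y \<in> S" using letter_val_in cd by auto
  note lc = letter_val_product[OF cd(1)] and ld = letter_val_product[OF cd(2)]
  have v_nf: "\<forall>n\<in>set v. lidem n = J_idem (f ?x ?y)" "set v \<subseteq> X" using nf[OF S(3)] v by auto
  from mult_J_cases[OF S(1,2)] show ?thesis
  proof
    assume J: "eqJ (f ?x ?y) ?x \<and> eqJ (f ?x ?y) ?y \<and> J_idem ?x = J_idem ?y"
    let ?e = "lidem c"
    have cd_e: "lidem d = ?e" using J lc ld by simp
    have ide: "J_idem (f ?x ?y) = ?e" using J_idem_cong[OF S(3) S(1)] J lc by simp
    have "lrep (f ?x ?y) = lleft c"
      using lrep_cong[OF S(3,1) eqR_if_eqJ_mult[OF S(1,2)]] J lc by simp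
    moreover have "rrep (f ?x ?y) = lright d"
      using rrep_cong[OF S(3,2) eqL_if_eqJ_mult[OF S(2,1)]] J ld by simp
    moreover have "admissible ?e (lleft c) (lright d)"
      using letter_props[OF cd(1)] letter_props[OF cd(2)] cd_e unfolding admissible_def by simp
    moreover have "group_part (f ?x ?y) \<in> H ?e" using group_part(1)[OF S(3)] ide by simp
    ultimately have "weight v = (if lleft c = ?e then 0 else 1) + (if lright d = ?e then 0 else 1)"
      using v group_nf[OF J_idem_in_E[OF S(3)]] weight_lift unfolding nf_def ide by simp
    moreover have "lright c \<noteq> ?e \<or> lleft d \<noteq> ?e" using cd(3) cd_e unfolding linked_def by auto
    ultimately have "weight v < weight [c, d]" using cd_e unfolding weight_def by auto
    moreover have "\<forall>n\<in>set v. in_class ?e n" using v_nf ide unfolding in_class_def by auto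
    ultimately show ?thesis using cd_e by simp
  next
    assume less: "J_height (f ?x ?y) < max (J_height ?x) (J_height ?y)"
    have E: "lidem c \<in> E" "lidem d \<in> E" "J_idem (f ?x ?y) \<in> E"
      using letter_props cd J_idem_in_E[OF S(3)] unfolding admissible_def by auto
    have "J_height (J_idem (f ?x ?y)) < max (J_height (lidem c)) (J_height (lidem d))"
      using less J_height_J_idem S lc ld by (metis J_height_J_idem)
    then have "J_rank (J_idem (f ?x ?y)) < max (J_rank (lidem c)) (J_rank (lidem d))"
      using J_rank_less by (metis less_max_iff_disj)
    then show ?thesis using v_nf by simp
  qed
qed

lemma block_mset_unchanged:
  assumes "u \<noteq> []" "v \<noteq> []" "\<forall>n\<in>set u. \<not> in_class e n" "\<forall>n\<in>set v. \<not> in_class e n"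
  shows "block_mset (in_class e) (p @ v @ q) = block_mset (in_class e) (p @ u @ q)"
  using block_mset_append_none assms by metis

lemma not_in_class_if_rank_less:
  "J_rank (lidem n) < J_rank e \<Longrightarrow> \<not> in_class e n"
  unfolding in_class_def by auto

lemma Rules_step_decreases:
  assumes "(w, w') \<in> rw_step X Rules"
  shows "\<exists>e\<in>E. (block_mset (in_class e) w', block_mset (in_class e) w) \<in> mult (block_order e)
    \<and> (\<forall>e'\<in>E. J_rank e < J_rank e' \<longrightarrow> block_mset (in_class e') w' = block_mset (in_class e') w)"
proof -
  obtain p u v q where w: "w = p @ u @ q" "w' = p @ v @ q" "(u, v) \<in> Rules" "p \<in> lists X" "q \<in> lists X"
    using assms by (rule rw_stepE)
  have uv: "u \<in> lists X" "u \<noteq> []" "v \<in> lists X" "v \<noteq> []"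
    using rules_over_Rules w(3) unfolding rules_over_def by auto
  have inside: ?thesis
    if e: "e \<in> E" and cls: "\<forall>n\<in>set u. in_class e n" "\<forall>n\<in>set v. in_class e n"
      and less: "\<And>p q. \<forall>n\<in>set p. in_class e n \<Longrightarrow> \<forall>n\<in>set q. in_class e n \<Longrightarrow>
        (p @ v @ q, p @ u @ q) \<in> block_order e" for e
  proof (intro bexI conjI ballI impI)
    show "(block_mset (in_class e) w', block_mset (in_class e) w) \<in> mult (block_order e)"
      unfolding w(1,2) using block_mset_replace_inside[OF uv(2,4) cls less] .
    fix e' assume "e' \<in> E" "J_rank e < J_rank e'"
    then have "\<not> in_class e' n" if "in_class e n" for n using that unfolding in_class_def by auto
    then show "block_mset (in_class e') w' = block_mset (in_class e') w"
      unfolding w(1,2) using block_mset_unchanged uv(2,4) cls by metis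
  qed (rule e)
  consider (lifted) e l r a b where "u = lift e l a b" "v = lift e r a b" "admissible e a b" "(l, r) \<in> HR e"
    | (pair) c d where "u = [c, d]" "v = nf (f (letter_val c) (letter_val d))" "c \<in> X" "d \<in> X" "\<not> linked c d"
    using w(3) unfolding Rules_def lifted_rules_def pair_rules_def by blast
  then show ?thesis
  proof cases
    case (lifted e l r a b)
    have e: "e \<in> E" using lifted(3) admissible_def by blast
    have lr: "l \<in> lists (HX e)" "r \<in> lists (HX e)" using HR_in_lists[OF e lifted(4)] by auto
    have "\<forall>n\<in>set u. in_class e n" "\<forall>n\<in>set v. in_class e n"
      unfolding lifted(1,2) in_class_def using lift_props[OF lifted(3) lr(1)] lift_props[OF lifted(3) lr(2)] by auto
    moreover have "(p @ v @ q, p @ u @ q) \<in> block_order e"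
      if "\<forall>n\<in>set p. in_class e n" "\<forall>n\<in>set q. in_class e n" for p q
      unfolding lifted(1,2) using lifted_rule_decreases[OF lifted(3,4) that] .
    ultimately show ?thesis using inside[OF e] by blast
  next
    case (pair c d)
    from pair_rule_cases[OF pair(3-5) pair(2)] show ?thesis
    proof
      assume A: "lidem c = lidem d \<and> (\<forall>n\<in>set v. in_class (lidem c) n) \<and> weight v < weight [c, d]"
      have e: "lidem c \<in> E" using letter_props[OF pair(3)] admissible_def by blast
      have u_cls: "\<forall>n\<in>set u. in_class (lidem c) n" using A pair(1,3,4) unfolding in_class_def by simp
      have v_cls: "\<forall>n\<in>set v. in_class (lidem c) n" using A by blast
      have less: "(p @ v @ q, p @ u @ q) \<in> block_order (lidem c)" for p q
      proof -
        have "weight (p @ v @ q) < weight (p @ u @ q)" using A unfolding pair(1) weight_append by simp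
        then show ?thesis unfolding block_order_def by simp
      qed
      show ?thesis using inside[OF e u_cls v_cls less] .
    next
      assume B: "\<forall>n\<in>set v. J_rank (lidem n) < max (J_rank (lidem c)) (J_rank (lidem d))"
      define e where "e = (if J_rank (lidem d) \<le> J_rank (lidem c) then lidem c else lidem d)"
      have e: "e \<in> E" using letter_props pair(3,4) unfolding e_def admissible_def by auto
      have rank_e: "J_rank e = max (J_rank (lidem c)) (J_rank (lidem d))" unfolding e_def by simp
      have cd: "in_class e c \<or> in_class e d" using pair(3,4) unfolding e_def in_class_def by simp
      have v_out: "\<forall>n\<in>set v. \<not> in_class e n" using B rank_e not_in_class_if_rank_less by simp
      show ?thesis
      proof (intro bexI conjI ballI impI)
        show "(block_mset (in_class e) w', block_mset (in_class e) w) \<in> mult (block_order e)"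
          unfolding w(1,2) pair(1) using block_mset_replace_pair[OF uv(4) v_out cd] block_order_factor
          by blast
        fix e' assume e': "e' \<in> E" "J_rank e < J_rank e'"
        have "\<forall>n\<in>set u. J_rank (lidem n) < J_rank e'" using pair(1) e'(2) rank_e by auto
        moreover have "\<forall>n\<in>set v. J_rank (lidem n) < J_rank e'"
          using B e'(2) unfolding rank_e[symmetric] using less_trans by blast
        ultimately have "\<forall>n\<in>set u. \<not> in_class e' n" "\<forall>n\<in>set v. \<not> in_class e' n"
          using not_in_class_if_rank_less by blast+
        then show "block_mset (in_class e') w' = block_mset (in_class e') w"
          unfolding w(1,2) using block_mset_unchanged uv(2,4) by metis
      qed (rule e)
    qed
  qed
qed

theorem Rules_noetherian: "rw_noetherian X Rules"
proof -
  have "wf {(x, y). \<exists>e\<in>E. (block_mset (in_class e) x, block_mset (in_class e) y) \<in> mult (block_order e)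
      \<and> (\<forall>e'\<in>E. J_rank e < J_rank e' \<longrightarrow> block_mset (in_class e') x = block_mset (in_class e') y)}"
    using finite_E J_rank_inj wf_mult[OF wf_block_order] by (intro wf_lex_family) (auto intro: inj_onI)
  then show ?thesis unfolding rw_noetherian_wf by (rule wf_subset) (auto dest: Rules_step_decreases)
qed

theorem has_finite_complete_presentation: "has_finite_complete_presentation S f"
proof -
  have into: "\<forall>w\<in>lists X - {[]}. val w \<in> S" using val_in by blast
  have hom: "\<forall>w1\<in>lists X - {[]}. \<forall>w2\<in>lists X - {[]}. val (w1 @ w2) = f (val w1) (val w2)"
    using val_append by blast
  have onto: "S \<subseteq> val ` (lists X - {[]})"
  proof
    fix y assume "y \<in> S"
    then have "nf y \<in> lists X - {[]}" "val (nf y) = y" using nf by auto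
    then show "y \<in> val ` (lists X - {[]})" by (metis image_eqI)
  qed
  have rules: "\<forall>(u, v)\<in>Rules. val u = val v" using Rules_val by blast
  have unique: "\<forall>x\<in>lists X - {[]}. \<forall>y\<in>lists X - {[]}. irred X Rules x \<longrightarrow> irred X Rules y \<longrightarrow> val x = val y \<longrightarrow> x = y"
    using irred_nf by (metis DiffE singletonI)
  note presentation = complete_presentation_by_normal_forms[OF rules_over_Rules Rules_noetherian into hom onto rules unique]
  have "finite_complete_rws X Rules"
    using finite_X finite_Rules rules_over_Rules Rules_noetherian presentation(1)
    unfolding finite_complete_rws_def rules_over_def by blast
  then show ?thesis
    using presentation(2) unfolding has_finite_complete_presentation_def presents_iff_pres_map by blast
qed

end

theorem theorem1p1:
  fixes S :: "'a set" and f :: "'a \<Rightarrow> 'a \<Rightarrow> 'a"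
  assumes "regular_semigroup S f"
    and "finite {I. left_ideal S f I}"
    and "finite {I. right_ideal S f I}"
    and "\<forall>H. maximal_subgroup S f H \<longrightarrow> has_finite_complete_presentation H f"
  shows "has_finite_complete_presentation S f"
proof -
  interpret regular_fcrs_subgroups S f
    using assms by unfold_locales
  show ?thesis by (rule has_finite_complete_presentation)
qed

end
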